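(* Let $k$ be an algebraically closed field of characteristic $0$, $R=k[x,y]$, and let $L=(x^d,x^{d-1}y^{a_1},\dots,y^{a_d})$ with $0=a_0<a_1<\dots<a_d$ be a lex-segment ideal whose differences $b_i=a_i-a_{i-1}$ satisfy $b_i\le b_{i+1}$ for $i=1,\dots,d-1$. Let $\psi:R[T_0,\dots,T_d]\to\mathcal R(L)=R[Lt]$ be the $R$-algebra map with $\psi(T_i)=x^{d-i}y^{a_i}t$, and $H=\ker\psi$. Then the elements $$xT_i-y^{b_i}T_{i-1}\ (i=1,\dots,d),\qquad T_iT_{j-1}-y^{b_i-b_j}T_{i-1}T_j\ (d\ge i>j\ge1)$$ form a Gröbner basis of $H$ with respect to any term order on $k[x,y,T_0,\dots,T_d]$ for which the initial term of each listed element is the term written on the left. Moreover, $\mathcal R(L)$ is normal.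
   Context: $\mathcal R(L)=\bigoplus_{n\ge0}L^n$ is the Rees algebra, identified with $R[Lt]\subseteq R[t]$. *)

theory Defs
  imports "HOL-Computational_Algebra.Polynomial" "HOL-Library.Poly_Mapping"
begin

type_synonym monom = "nat \<Rightarrow>\<^sub>0 nat"
type_synonym 'k mpoly = "monom \<Rightarrow>\<^sub>0 'k"

definition Var :: "nat \<Rightarrow> 'k::comm_ring_1 mpoly" where
  "Var i = Poly_Mapping.single (Poly_Mapping.single i 1) 1"

definition polys_in :: "nat \<Rightarrow> 'k::comm_ring_1 mpoly set" where
  "polys_in n = {f. \<forall>m \<in> Poly_Mapping.keys f. Poly_Mapping.keys m \<subseteq> {..<n}}"

definition monoms_in :: "nat \<Rightarrow> monom set" where
  "monoms_in n = {m. Poly_Mapping.keys m \<subseteq> {..<n}}"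

definition subst :: "(nat \<Rightarrow> 'k::comm_ring_1 mpoly) \<Rightarrow> 'k mpoly \<Rightarrow> 'k mpoly" where
  "subst s f = (\<Sum>m \<in> Poly_Mapping.keys f. Poly_Mapping.single 0 (Poly_Mapping.lookup f m) *
                   (\<Prod>i \<in> Poly_Mapping.keys m. s i ^ Poly_Mapping.lookup m i))"

definition term_order :: "nat \<Rightarrow> (monom \<Rightarrow> monom \<Rightarrow> bool) \<Rightarrow> bool" where
  "term_order n ord \<longleftrightarrow>
     (\<forall>m \<in> monoms_in n. ord m m) \<and>
     (\<forall>m \<in> monoms_in n. \<forall>m' \<in> monoms_in n. ord m m' \<and> ord m' m \<longrightarrow> m = m') \<and>
     (\<forall>m \<in> monoms_in n. \<forall>m' \<in> monoms_in n. \<forall>m'' \<in> monoms_in n.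
         ord m m' \<and> ord m' m'' \<longrightarrow> ord m m'') \<and>
     (\<forall>m \<in> monoms_in n. \<forall>m' \<in> monoms_in n. ord m m' \<or> ord m' m) \<and>
     (\<forall>m \<in> monoms_in n. ord 0 m) \<and>
     (\<forall>m \<in> monoms_in n. \<forall>m' \<in> monoms_in n. \<forall>u \<in> monoms_in n.
         ord m m' \<longrightarrow> ord (m + u) (m' + u))"

definition lead_monom :: "(monom \<Rightarrow> monom \<Rightarrow> bool) \<Rightarrow> 'k::zero mpoly \<Rightarrow> monom" where
  "lead_monom ord f = (THE m. m \<in> Poly_Mapping.keys f \<and> (\<forall>m' \<in> Poly_Mapping.keys f. ord m' m))"

definition ideal_gen :: "nat \<Rightarrow> 'k::comm_ring_1 mpoly set \<Rightarrow> 'k mpoly set" where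
  "ideal_gen n A = {f. \<exists>S c. finite S \<and> S \<subseteq> A \<and> (\<forall>s \<in> S. c s \<in> polys_in n) \<and>
                          f = (\<Sum>s \<in> S. c s * s)}"

definition mon :: "monom \<Rightarrow> 'k::comm_ring_1 mpoly" where
  "mon m = Poly_Mapping.single m 1"

definition groebner_basis ::
  "nat \<Rightarrow> (monom \<Rightarrow> monom \<Rightarrow> bool) \<Rightarrow> 'k::comm_ring_1 mpoly set \<Rightarrow> 'k mpoly set \<Rightarrow> bool" where
  "groebner_basis n ord G I \<longleftrightarrow>
     G \<subseteq> I \<and>
     ideal_gen n {(mon (lead_monom ord f) :: 'k mpoly) | f. f \<in> I \<and> f \<noteq> 0} =
     ideal_gen n {(mon (lead_monom ord g) :: 'k mpoly) | g. g \<in> G \<and> g \<noteq> 0}"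

text \<open>A subring A of a domain is normal (integrally closed in its field of
  fractions): every fraction p/q (p, q in A, q nonzero) that is integral over A
  lies in A. The integral equation (p/q)^n + c_(n-1) (p/q)^(n-1) + ... + c_0 = 0
  is written with denominators cleared.\<close>
definition normal_subring :: "'a::idom set \<Rightarrow> bool" where
  "normal_subring A \<longleftrightarrow>
     (\<forall>p \<in> A. \<forall>q \<in> A. q \<noteq> 0 \<longrightarrow>
        (\<exists>n>0. \<exists>c. (\<forall>i<n. c i \<in> A) \<and>
             p ^ n + (\<Sum>i<n. c i * p ^ i * q ^ (n - i)) = 0) \<longrightarrow>
        (\<exists>r \<in> A. p = r * q))"

text \<open>Variable conventions.
  Source ring S = k[x, y, T_0, ..., T_d]: x = X_0, y = X_1, T_i = X_(i+2).
  Target ring k[x, y, t]: x = X_0, y = X_1, t = X_2.\<close>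

definition Tv :: "nat \<Rightarrow> 'k::comm_ring_1 mpoly" where
  "Tv i = Var (i + 2)"

definition rees_map :: "nat \<Rightarrow> (nat \<Rightarrow> nat) \<Rightarrow> 'k::comm_ring_1 mpoly \<Rightarrow> 'k mpoly" where
  "rees_map d a = subst (\<lambda>j. if j = 0 then Var 0 else if j = 1 then Var 1
                            else Var 0 ^ (d - (j - 2)) * Var 1 ^ a (j - 2) * Var 2)"

definition rees_kernel :: "nat \<Rightarrow> (nat \<Rightarrow> nat) \<Rightarrow> 'k::comm_ring_1 mpoly set" where
  "rees_kernel d a = {f \<in> polys_in (d + 3). rees_map d a f = 0}"

definition rees_algebra :: "nat \<Rightarrow> (nat \<Rightarrow> nat) \<Rightarrow> 'k::comm_ring_1 mpoly set" where
  "rees_algebra d a = rees_map d a ` polys_in (d + 3)"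

definition diff_seq :: "(nat \<Rightarrow> nat) \<Rightarrow> nat \<Rightarrow> nat" where
  "diff_seq a i = a i - a (i - 1)"

definition gb_linear :: "(nat \<Rightarrow> nat) \<Rightarrow> nat \<Rightarrow> 'k::comm_ring_1 mpoly" where
  "gb_linear a i = Var 0 * Tv i - Var 1 ^ diff_seq a i * Tv (i - 1)"

definition gb_quad :: "(nat \<Rightarrow> nat) \<Rightarrow> nat \<Rightarrow> nat \<Rightarrow> 'k::comm_ring_1 mpoly" where
  "gb_quad a i j = Tv i * Tv (j - 1) - Var 1 ^ (diff_seq a i - diff_seq a j) * Tv (i - 1) * Tv j"

definition gb_set :: "nat \<Rightarrow> (nat \<Rightarrow> nat) \<Rightarrow> 'k::comm_ring_1 mpoly set" where
  "gb_set d a = {gb_linear a i | i. 1 \<le> i \<and> i \<le> d} \<union>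
               {gb_quad a i j | i j. j < i \<and> i \<le> d \<and> 1 \<le> j}"

end

theory Submission
  imports Defs
begin

text \<open>The Rees map sends monomials to monomials, \<open>T_i \<mapsto> x^(d-i) y^(a_i) t\<close>, so it is the linear
  extension of an additive map on exponent vectors. Its kernel is therefore spanned by binomials,
  and the listed binomials form a Groebner basis as soon as (i) every monomial can be rewritten with
  them into a standard monomial, one divisible by no initial term (the rewriting terminates because
  a weight that is convex in the \<open>T\<close>-indices decreases), and (ii) the exponent map is injective on
  standard monomials. A standard monomial is \<open>x^X y^Y T_0^D\<close> or \<open>y^Y T_k^P T_(k+1)^Q\<close>, and it is
  recovered from its image \<open>x^X' y^Y' t^D\<close> by dividing \<open>D d - X'\<close> by \<open>D\<close>.

  Since the \<open>b_i\<close> increase, the exponents of the generators \<open>x^(d-i) y^(a_i) t\<close> form a convex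
  chain, and the image of the exponent map is the set of all lattice points of the cone cut out by
  the planes through consecutive generators. The semigroup ring of such a saturated monoid is normal:
  if \<open>p/q\<close> is integral, then \<open>q^N (p/q)^k\<close> lies in the ring for all \<open>k\<close>, which forces the
  lexicographically leading exponent of \<open>p\<close> minus that of \<open>q\<close> into the cone, and dividing off leading
  terms shows that \<open>q\<close> divides \<open>p\<close>.\<close>

abbreviation keys :: "('a \<Rightarrow>\<^sub>0 'b::zero) \<Rightarrow> 'a set" where
  "keys \<equiv> Poly_Mapping.keys"
abbreviation single :: "'a \<Rightarrow> 'b \<Rightarrow> 'a \<Rightarrow>\<^sub>0 'b::zero" where
  "single \<equiv> Poly_Mapping.single"
abbreviation lookup :: "('a \<Rightarrow>\<^sub>0 'b::zero) \<Rightarrow> 'a \<Rightarrow> 'b" where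
  "lookup \<equiv> Poly_Mapping.lookup"

lemma mon_mult: "(mon m :: 'k::comm_ring_1 mpoly) * mon m' = mon (m + m')"
  unfolding mon_def by (simp add: mult_single)

lemma keys_mon [simp]: "keys (mon m :: 'k::comm_ring_1 mpoly) = {m}"
  unfolding mon_def by simp

lemma lookup_mon: "lookup (mon m :: 'k::comm_ring_1 mpoly) m' = (if m = m' then 1 else 0)"
  unfolding mon_def by (simp add: lookup_single when_def)

lemma Var_eq_mon: "Var i = mon (single i 1)"
  unfolding Var_def mon_def by simp

lemma Var_power: "(Var i :: 'k::comm_ring_1 mpoly) ^ k = mon (single i k)"
proof (induction k)
  case 0
  show ?case by (simp add: mon_def)
next
  case (Suc k)
  then show ?case by (simp add: Var_eq_mon mon_mult flip: single_add)
qed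

lemma Tv_eq_mon: "Tv i = mon (single (i + 2) 1)"
  unfolding Tv_def by (rule Var_eq_mon)

lemma poly_mapping_sum_single: "f = (\<Sum>m\<in>keys f. single m (lookup f m))"
proof (rule poly_mapping_eqI)
  fix m'
  have "lookup (\<Sum>m\<in>keys f. single m (lookup f m)) m' = (\<Sum>m\<in>keys f. if m = m' then lookup f m else 0)"
    by (simp add: lookup_sum lookup_single when_def)
  also have "\<dots> = lookup f m'"
    by (simp add: sum.delta' in_keys_iff)
  finally show "lookup f m' = lookup (\<Sum>m\<in>keys f. single m (lookup f m)) m'" ..
qed

lemma monoms_in_zero [simp]: "0 \<in> monoms_in n"
  unfolding monoms_in_def by simp

lemma monoms_in_add: "m \<in> monoms_in n \<Longrightarrow> m' \<in> monoms_in n \<Longrightarrow> m + m' \<in> monoms_in n"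
  unfolding monoms_in_def using keys_add[of m m'] by auto

lemma monoms_in_single: "i < n \<Longrightarrow> single i k \<in> monoms_in n"
  unfolding monoms_in_def by simp

lemma monoms_in_diff:
  assumes "m \<in> monoms_in n" shows "m - u \<in> monoms_in n"
proof -
  have "keys (m - u) \<subseteq> keys m" by (auto simp: in_keys_iff lookup_minus)
  then show ?thesis using assms unfolding monoms_in_def by blast
qed

lemma monoms_in_add_cancel: "m + u \<in> monoms_in n \<Longrightarrow> u \<in> monoms_in n"
  using monoms_in_diff[of "m + u" n m] by simp

lemma lookup_monoms_in: "m \<in> monoms_in n \<Longrightarrow> n \<le> i \<Longrightarrow> lookup m i = 0"
  unfolding monoms_in_def using not_in_keys_iff_lookup_eq_zero by fastforce

lemma polys_in_iff: "f \<in> polys_in n \<longleftrightarrow> keys f \<subseteq> monoms_in n"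
  unfolding polys_in_def monoms_in_def by auto

lemma polys_in_add: "f \<in> polys_in n \<Longrightarrow> g \<in> polys_in n \<Longrightarrow> f + g \<in> polys_in n"
  unfolding polys_in_iff using keys_add[of f g] by auto

lemma polys_in_diff: "f \<in> polys_in n \<Longrightarrow> g \<in> polys_in n \<Longrightarrow> (f - g :: 'k::comm_ring_1 mpoly) \<in> polys_in n"
  unfolding polys_in_iff using keys_diff[of f g] by auto

lemma polys_in_mult:
  assumes "f \<in> polys_in n" "g \<in> polys_in n"
  shows "(f * g :: 'k::comm_ring_1 mpoly) \<in> polys_in n"
proof -
  have "x \<in> monoms_in n" if x: "x \<in> keys (f * g)" for x
  proof -
    obtain u v where "x = u + v" "u \<in> keys f" "v \<in> keys g"
      using x keys_mult[of f g] by blast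
    then show ?thesis using assms monoms_in_add unfolding polys_in_iff by blast
  qed
  then show ?thesis unfolding polys_in_iff by blast
qed

lemma polys_in_mon: "m \<in> monoms_in n \<Longrightarrow> (mon m :: 'k::comm_ring_1 mpoly) \<in> polys_in n"
  unfolding polys_in_iff by simp

lemma mon_nonzero: "(mon m :: 'k::comm_ring_1 mpoly) \<noteq> 0"
  using keys_mon[of m] by (metis empty_not_insert keys_zero)

lemma keys_binomial:
  "L \<noteq> R \<Longrightarrow> keys (mon L - mon R :: 'k::comm_ring_1 mpoly) = {L, R}"
  by (auto simp: in_keys_iff lookup_minus lookup_mon split: if_splits)

lemma binomial_nonzero:
  assumes "L \<noteq> R" shows "(mon L - mon R :: 'k::comm_ring_1 mpoly) \<noteq> 0"
  using keys_binomial[OF assms] by (metis empty_not_insert keys_zero)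

lemma term_order_refl: "term_order n ord \<Longrightarrow> m \<in> monoms_in n \<Longrightarrow> ord m m"
  unfolding term_order_def by blast

lemma term_order_antisym:
  "term_order n ord \<Longrightarrow> m \<in> monoms_in n \<Longrightarrow> m' \<in> monoms_in n \<Longrightarrow> ord m m' \<Longrightarrow> ord m' m \<Longrightarrow> m = m'"
  unfolding term_order_def by blast

lemma term_order_trans:
  "term_order n ord \<Longrightarrow> m \<in> monoms_in n \<Longrightarrow> m' \<in> monoms_in n \<Longrightarrow> m'' \<in> monoms_in n \<Longrightarrow>
    ord m m' \<Longrightarrow> ord m' m'' \<Longrightarrow> ord m m''"
  unfolding term_order_def by blast

lemma term_order_total:
  "term_order n ord \<Longrightarrow> m \<in> monoms_in n \<Longrightarrow> m' \<in> monoms_in n \<Longrightarrow> ord m m' \<or> ord m' m"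
  unfolding term_order_def by blast

lemma term_order_add:
  "term_order n ord \<Longrightarrow> m \<in> monoms_in n \<Longrightarrow> m' \<in> monoms_in n \<Longrightarrow> u \<in> monoms_in n \<Longrightarrow>
    ord m m' \<Longrightarrow> ord (m + u) (m' + u)"
  unfolding term_order_def by blast

lemma term_order_has_max:
  assumes ord: "term_order n ord" and "finite K" "K \<noteq> {}" "K \<subseteq> monoms_in n"
  shows "\<exists>M\<in>K. \<forall>m\<in>K. ord m M"
  using assms(2-4)
proof (induction K rule: finite_ne_induct)
  case (singleton x)
  then show ?case using term_order_refl[OF ord] by auto
next
  case (insert x F)
  then obtain M where M: "M \<in> F" "\<forall>m\<in>F. ord m M" by auto
  show ?case
  proof (cases "ord x M")
    case True
    then show ?thesis using M by auto
  next
    case False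
    then have "ord M x" using term_order_total[OF ord, of x M] M insert.prems by auto
    then have "\<forall>m\<in>F. ord m x" using M insert.prems term_order_trans[OF ord] by blast
    then show ?thesis using term_order_refl[OF ord, of x] insert.prems by auto
  qed
qed

lemma lead_monom_max:
  assumes ord: "term_order n ord" and f: "f \<in> polys_in n" "f \<noteq> 0"
  shows "lead_monom ord f \<in> keys f" "m \<in> keys f \<Longrightarrow> ord m (lead_monom ord f)"
proof -
  have K: "keys f \<subseteq> monoms_in n" using f by (simp add: polys_in_iff)
  obtain M where M: "M \<in> keys f" "\<forall>m\<in>keys f. ord m M"
    using term_order_has_max[OF ord finite_keys _ K] f by auto
  have "lead_monom ord f = M"
    unfolding lead_monom_def
    by (rule the_equality) (use M K term_order_antisym[OF ord] in blast)+
  then show "lead_monom ord f \<in> keys f" "m \<in> keys f \<Longrightarrow> ord m (lead_monom ord f)"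
    using M by auto
qed

lemma lead_monom_mon:
  assumes "term_order n ord" "m \<in> monoms_in n"
  shows "lead_monom ord (mon m :: 'k::comm_ring_1 mpoly) = m"
  using lead_monom_max(1)[OF assms(1) polys_in_mon[OF assms(2)] mon_nonzero] by simp

lemma lead_monom_binomial_iff:
  assumes ord: "term_order n ord" and "L \<noteq> R" "L \<in> monoms_in n" "R \<in> monoms_in n"
  shows "lead_monom ord (mon L - mon R :: 'k::comm_ring_1 mpoly) = L \<longleftrightarrow> ord R L"
proof -
  let ?g = "mon L - mon R :: 'k mpoly"
  have g: "?g \<in> polys_in n" "?g \<noteq> 0" "keys ?g = {L, R}"
    using polys_in_diff[OF polys_in_mon polys_in_mon] binomial_nonzero keys_binomial assms
    by blast+
  show ?thesis
  proof
    assume "lead_monom ord ?g = L"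
    then show "ord R L" using lead_monom_max(2)[OF ord g(1,2)] g(3) by force
  next
    assume "ord R L"
    have "lead_monom ord ?g \<in> {L, R}" using lead_monom_max(1)[OF ord g(1,2)] g(3) by simp
    moreover have "ord L (lead_monom ord ?g)" using lead_monom_max(2)[OF ord g(1,2)] g(3) by simp
    ultimately show "lead_monom ord ?g = L"
      using term_order_antisym[OF ord _ _ \<open>ord R L\<close>] assms by auto
  qed
qed

lemma ideal_gen_mono: "A \<subseteq> B \<Longrightarrow> ideal_gen n A \<subseteq> ideal_gen n B"
  unfolding ideal_gen_def by blast

lemma ideal_gen_zero: "0 \<in> ideal_gen n A"
  unfolding ideal_gen_def by (intro CollectI exI[of _ "{}"]) simp

lemma ideal_gen_base: "f \<in> A \<Longrightarrow> f \<in> ideal_gen n (A :: 'k::comm_ring_1 mpoly set)"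
  unfolding ideal_gen_def
  by (intro CollectI exI[of _ "{f}"] exI[of _ "\<lambda>_. 1"]) (auto simp: polys_in_iff)

lemma ideal_gen_add:
  assumes "f \<in> ideal_gen n A" "g \<in> ideal_gen n A"
  shows "f + g \<in> ideal_gen n (A :: 'k::comm_ring_1 mpoly set)"
proof -
  obtain S c where S: "finite S" "S \<subseteq> A" "\<forall>s\<in>S. c s \<in> polys_in n" "f = (\<Sum>s\<in>S. c s * s)"
    using assms(1) unfolding ideal_gen_def by blast
  obtain S' c' where S': "finite S'" "S' \<subseteq> A" "\<forall>s\<in>S'. c' s \<in> polys_in n" "g = (\<Sum>s\<in>S'. c' s * s)"
    using assms(2) unfolding ideal_gen_def by blast
  define e where "e s = (if s \<in> S then c s else 0) + (if s \<in> S' then c' s else 0)" for s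
  have "(\<Sum>s\<in>S \<union> S'. e s * s)
      = (\<Sum>s\<in>S \<union> S'. if s \<in> S then c s * s else 0) + (\<Sum>s\<in>S \<union> S'. if s \<in> S' then c' s * s else 0)"
    unfolding e_def by (simp add: sum.distrib distrib_right if_distrib[of "\<lambda>x. x * _"] cong: if_cong)
  also have "\<dots> = f + g"
    using S S' by (simp add: sum.If_cases Int_absorb1 Int_absorb2)
  finally have eq: "f + g = (\<Sum>s\<in>S \<union> S'. e s * s)" by simp
  have "\<forall>s\<in>S \<union> S'. e s \<in> polys_in n"
    using S S' unfolding e_def by (auto intro: polys_in_add)
  then show ?thesis
    unfolding ideal_gen_def
    by (intro CollectI exI[of _ "S \<union> S'"] exI[of _ e]) (use S S' eq in auto)
qed

lemma ideal_gen_mult: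
  assumes "p \<in> polys_in n" "f \<in> ideal_gen n A"
  shows "p * f \<in> ideal_gen n (A :: 'k::comm_ring_1 mpoly set)"
proof -
  obtain S c where S: "finite S" "S \<subseteq> A" "\<forall>s\<in>S. c s \<in> polys_in n" "f = (\<Sum>s\<in>S. c s * s)"
    using assms(2) unfolding ideal_gen_def by blast
  have "p * f = (\<Sum>s\<in>S. (p * c s) * s)" using S by (simp add: sum_distrib_left mult.assoc)
  moreover have "\<forall>s\<in>S. p * c s \<in> polys_in n" using S(3) assms(1) polys_in_mult by blast
  ultimately show ?thesis
    unfolding ideal_gen_def
    by (intro CollectI exI[of _ S] exI[of _ "\<lambda>s. p * c s"]) (use S in auto)
qed

lemma ideal_gen_subset:
  assumes "A \<subseteq> ideal_gen n B"
  shows "ideal_gen n A \<subseteq> ideal_gen n (B :: 'k::comm_ring_1 mpoly set)"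
proof
  fix f assume "f \<in> ideal_gen n A"
  then obtain S c where S: "finite S" "S \<subseteq> A" "\<forall>s\<in>S. c s \<in> polys_in n" "f = (\<Sum>s\<in>S. c s * s)"
    unfolding ideal_gen_def by blast
  from S(1-3) have "(\<Sum>s\<in>S. c s * s) \<in> ideal_gen n B"
  proof (induction S rule: finite_induct)
    case empty
    show ?case by (simp add: ideal_gen_zero)
  next
    case (insert s S)
    then have "c s * s \<in> ideal_gen n B" using assms by (blast intro: ideal_gen_mult)
    then show ?case using insert by (simp add: ideal_gen_add)
  qed
  then show "f \<in> ideal_gen n B" using S(4) by simp
qed

section \<open>Monomial maps and binomial Groebner bases\<close>

definition monomial_image :: "(monom \<Rightarrow> monom) \<Rightarrow> 'k::comm_ring_1 mpoly \<Rightarrow> 'k mpoly" where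
  "monomial_image \<phi> f = (\<Sum>m\<in>keys f. single (\<phi> m) (lookup f m))"

definition monomial_subring :: "monom set \<Rightarrow> 'k::comm_ring_1 mpoly set" where
  "monomial_subring C = {f. keys f \<subseteq> C}"

lemma monomial_image_superset:
  assumes "finite K" "keys f \<subseteq> K"
  shows "monomial_image \<phi> f = (\<Sum>m\<in>K. single (\<phi> m) (lookup f m))"
  unfolding monomial_image_def
  by (rule sum.mono_neutral_left) (use assms in \<open>auto simp: in_keys_iff\<close>)

lemma lookup_monomial_image:
  "lookup (monomial_image \<phi> f) e = (\<Sum>m\<in>keys f. if \<phi> m = e then lookup f m else 0)"
  unfolding monomial_image_def by (simp add: lookup_sum lookup_single when_def)

lemma monomial_image_binomial:
  assumes "L \<noteq> R" "\<phi> L = \<phi> R"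
  shows "monomial_image \<phi> (mon L - mon R :: 'k::comm_ring_1 mpoly) = 0"
proof -
  have "monomial_image \<phi> (mon L - mon R :: 'k mpoly) = single (\<phi> L) 1 + single (\<phi> R) (- 1)"
    unfolding monomial_image_def keys_binomial[OF assms(1)]
    using assms(1) by (simp add: lookup_minus lookup_mon)
  then show ?thesis using assms(2) by (simp add: single_uminus)
qed

lemma monomial_image_mem_subring:
  "f \<in> polys_in n \<Longrightarrow> monomial_image \<phi> f \<in> (monomial_subring (\<phi> ` monoms_in n) :: 'k::comm_ring_1 mpoly set)"
  using keys_sum[of "\<lambda>m. single (\<phi> m) (lookup f m)" "keys f"]
  unfolding monomial_image_def monomial_subring_def polys_in_iff by (auto split: if_splits) blast

lemma monomial_subring_subset_image:
  assumes f: "f \<in> monomial_subring (\<phi> ` monoms_in n)"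
  shows "(f :: 'k::comm_ring_1 mpoly) \<in> monomial_image \<phi> ` polys_in n"
proof -
  define \<psi> where "\<psi> = inv_into (monoms_in n) \<phi>"
  have \<psi>: "\<psi> e \<in> monoms_in n" "\<phi> (\<psi> e) = e" if "e \<in> keys f" for e
    using f that unfolding \<psi>_def monomial_subring_def by (auto intro: inv_into_into f_inv_into_f)
  then have inj: "inj_on \<psi> (keys f)" by (metis inj_onI)
  define g where "g = (\<Sum>e\<in>keys f. single (\<psi> e) (lookup f e))"
  have keys_g: "keys g \<subseteq> \<psi> ` keys f"
    using keys_sum[of "\<lambda>e. single (\<psi> e) (lookup f e)" "keys f"] unfolding g_def
    by (auto split: if_splits)
  have lookup_g: "lookup g (\<psi> e) = lookup f e" if "e \<in> keys f" for e
  proof -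
    have "lookup g (\<psi> e) = (\<Sum>e'\<in>keys f. if e' = e then lookup f e' else 0)"
      unfolding g_def lookup_sum
      by (rule sum.cong) (use inj that in \<open>auto simp: lookup_single when_def inj_on_eq_iff\<close>)
    then show ?thesis using that by simp
  qed
  have "monomial_image \<phi> g = (\<Sum>m\<in>\<psi> ` keys f. single (\<phi> m) (lookup g m))"
    by (rule monomial_image_superset[OF _ keys_g]) simp
  also have "\<dots> = (\<Sum>e\<in>keys f. single e (lookup f e))"
    by (simp add: sum.reindex[OF inj] \<psi> lookup_g)
  also have "\<dots> = f"
    by (rule poly_mapping_sum_single[symmetric])
  finally have "f = monomial_image \<phi> g" ..
  moreover have "g \<in> polys_in n"
    using keys_g \<psi> unfolding polys_in_iff by blast
  ultimately show ?thesis by blast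
qed

lemma monomial_image_range:
  "monomial_image \<phi> ` polys_in n = (monomial_subring (\<phi> ` monoms_in n) :: 'k::comm_ring_1 mpoly set)"
  using monomial_image_mem_subring monomial_subring_subset_image by blast

definition standard_monom :: "(monom \<times> monom) set \<Rightarrow> monom \<Rightarrow> bool" where
  "standard_monom B m \<longleftrightarrow> (\<forall>(L, R)\<in>B. \<forall>u. m \<noteq> L + u)"

lemma standard_monom_reduction:
  assumes ord: "term_order n ord"
    and B: "\<And>L R. (L, R) \<in> B \<Longrightarrow>
      L \<in> monoms_in n \<and> R \<in> monoms_in n \<and> \<phi> L = \<phi> R \<and> ord R L \<and> w R < (w L :: nat)"
    and \<phi>_add: "\<And>m u. \<phi> (m + u) = \<phi> m + \<phi> u"
    and w_add: "\<And>m u. w (m + u) = w m + w u"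
    and m: "m \<in> monoms_in n"
  shows "\<exists>s\<in>monoms_in n. standard_monom B s \<and> \<phi> s = \<phi> m \<and> ord s m"
  using m
proof (induction "w m" arbitrary: m rule: less_induct)
  case less
  show ?case
  proof (cases "standard_monom B m")
    case True
    then show ?thesis using less.prems term_order_refl[OF ord] by blast
  next
    case False
    then obtain L R u where LR: "(L, R) \<in> B" and m_eq: "m = L + u"
      unfolding standard_monom_def by blast
    have u: "u \<in> monoms_in n" using less.prems m_eq monoms_in_add_cancel by blast
    have R: "R \<in> monoms_in n" "\<phi> L = \<phi> R" "ord R L" "w R < w L" using B[OF LR] by auto
    have Ru: "R + u \<in> monoms_in n" using R(1) u by (rule monoms_in_add)
    have "w (R + u) < w m" using R(4) m_eq w_add by simp
    then obtain s where s: "s \<in> monoms_in n" "standard_monom B s" "\<phi> s = \<phi> (R + u)" "ord s (R + u)"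
      using less.hyps Ru by blast
    have "ord (R + u) m"
      using term_order_add[OF ord R(1) _ u R(3)] B[OF LR] m_eq by blast
    then have "ord s m" using term_order_trans[OF ord s(1) Ru less.prems s(4)] by blast
    moreover have "\<phi> s = \<phi> m" using s(3) R(2) m_eq \<phi>_add by simp
    ultimately show ?thesis using s(1,2) by blast
  qed
qed

lemma binomials_in_kernel:
  assumes "\<And>L R. (L, R) \<in> B \<Longrightarrow> L \<in> monoms_in n \<and> R \<in> monoms_in n \<and> L \<noteq> R \<and> \<phi> L = \<phi> R"
  shows "(\<lambda>(L, R). mon L - mon R) ` B \<subseteq> ({f \<in> polys_in n. monomial_image \<phi> f = 0} :: 'k::comm_ring_1 mpoly set)"
proof
  fix g :: "'k mpoly"
  assume "g \<in> (\<lambda>(L, R). mon L - mon R) ` B"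
  then obtain L R where LR: "(L, R) \<in> B" "g = mon L - mon R" by auto
  then show "g \<in> {f \<in> polys_in n. monomial_image \<phi> f = 0}"
    using assms[OF LR(1)] by (simp add: polys_in_diff polys_in_mon monomial_image_binomial)
qed

text \<open>If the leading monomial \<open>m\<close> of a kernel element were standard, some other monomial \<open>m'\<close> of
  the same polynomial would have the same image; reducing \<open>m'\<close> gives a standard monomial
  below \<open>m'\<close> with the image of \<open>m\<close>, which by injectivity is \<open>m\<close> itself.\<close>

lemma lead_monom_kernel_not_standard:
  assumes ord: "term_order n ord"
    and reduce: "\<And>m. m \<in> monoms_in n \<Longrightarrow> \<exists>s\<in>monoms_in n. standard_monom B s \<and> \<phi> s = \<phi> m \<and> ord s m"
    and inj: "inj_on \<phi> {s \<in> monoms_in n. standard_monom B s}"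
    and f: "f \<in> polys_in n" "monomial_image \<phi> f = 0" "(f :: 'k::comm_ring_1 mpoly) \<noteq> 0"
  shows "\<not> standard_monom B (lead_monom ord f)"
proof
  let ?m = "lead_monom ord f"
  assume std: "standard_monom B ?m"
  have m: "?m \<in> keys f" "?m \<in> monoms_in n"
    using lead_monom_max(1)[OF ord f(1,3)] f(1) by (auto simp: polys_in_iff)
  have "\<exists>m'\<in>keys f. m' \<noteq> ?m \<and> \<phi> m' = \<phi> ?m"
  proof (rule ccontr)
    assume "\<not> ?thesis"
    then have "(\<Sum>m'\<in>keys f. if \<phi> m' = \<phi> ?m then lookup f m' else 0)
               = (\<Sum>m'\<in>keys f. if m' = ?m then lookup f m' else 0)"
      by (intro sum.cong) auto
    then have "lookup (monomial_image \<phi> f) (\<phi> ?m) = lookup f ?m"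
      using m(1) by (simp add: lookup_monomial_image)
    then show False using f(2) m(1) by (simp add: in_keys_iff)
  qed
  then obtain m' where m': "m' \<in> keys f" "m' \<noteq> ?m" "\<phi> m' = \<phi> ?m" by blast
  have m'_in: "m' \<in> monoms_in n" using m'(1) f(1) by (auto simp: polys_in_iff)
  obtain s where s: "s \<in> monoms_in n" "standard_monom B s" "\<phi> s = \<phi> m'" "ord s m'"
    using reduce[OF m'_in] by blast
  have "s = ?m" by (rule inj_onD[OF inj]) (use s m std m' in auto)
  then have "m' = ?m"
    using term_order_antisym[OF ord m'_in m(2) lead_monom_max(2)[OF ord f(1,3) m'(1)]] s(4)
    by simp
  then show False using m'(2) by simp
qed

theorem binomial_groebner_basis:
  assumes ord: "term_order n ord"
    and B: "\<And>L R. (L, R) \<in> B \<Longrightarrow>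
      L \<in> monoms_in n \<and> R \<in> monoms_in n \<and> L \<noteq> R \<and> \<phi> L = \<phi> R \<and> ord R L"
    and reduce: "\<And>m. m \<in> monoms_in n \<Longrightarrow> \<exists>s\<in>monoms_in n. standard_monom B s \<and> \<phi> s = \<phi> m \<and> ord s m"
    and inj: "inj_on \<phi> {s \<in> monoms_in n. standard_monom B s}"
  shows "groebner_basis n ord ((\<lambda>(L, R). mon L - mon R) ` B :: 'k::comm_ring_1 mpoly set)
           {f \<in> polys_in n. monomial_image \<phi> f = 0}"
proof -
  let ?G = "(\<lambda>(L, R). mon L - mon R) ` B :: 'k mpoly set"
  let ?I = "{f \<in> polys_in n. monomial_image \<phi> f = 0} :: 'k mpoly set"
  let ?inG = "{mon (lead_monom ord g) | g. g \<in> ?G \<and> g \<noteq> 0} :: 'k mpoly set"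
  let ?inI = "{mon (lead_monom ord f) | f. f \<in> ?I \<and> f \<noteq> 0} :: 'k mpoly set"
  have G_I: "?G \<subseteq> ?I" using B by (intro binomials_in_kernel) blast
  have "?inI \<subseteq> ideal_gen n ?inG"
  proof
    fix x assume "x \<in> ?inI"
    then obtain f :: "'k mpoly" where f: "f \<in> polys_in n" "monomial_image \<phi> f = 0" "f \<noteq> 0"
      and x: "x = mon (lead_monom ord f)" by blast
    have m: "lead_monom ord f \<in> monoms_in n"
      using lead_monom_max(1)[OF ord f(1,3)] f(1) by (auto simp: polys_in_iff)
    obtain L R u where LR: "(L, R) \<in> B" and m_eq: "lead_monom ord f = L + u"
      using lead_monom_kernel_not_standard[OF ord reduce inj f(1-3)] unfolding standard_monom_def by blast
    have u: "u \<in> monoms_in n" using m unfolding m_eq by (rule monoms_in_add_cancel)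
    have "L \<in> monoms_in n" "R \<in> monoms_in n" "L \<noteq> R" "ord R L" using B[OF LR] by auto
    then have "lead_monom ord (mon L - mon R :: 'k mpoly) = L" "mon L - mon R \<noteq> (0 :: 'k mpoly)"
      using lead_monom_binomial_iff[OF ord] binomial_nonzero by blast+
    moreover have "mon L - mon R \<in> ?G" using LR by force
    ultimately have "mon L \<in> ?inG" by (smt (verit) mem_Collect_eq)
    then have "mon u * mon L \<in> ideal_gen n ?inG"
      by (intro ideal_gen_mult polys_in_mon u ideal_gen_base)
    then show "x \<in> ideal_gen n ?inG" using x m_eq by (simp add: mon_mult add.commute)
  qed
  moreover have "?inG \<subseteq> ?inI"
    using G_I by (intro Collect_mono) blast
  ultimately have "ideal_gen n ?inI = ideal_gen n ?inG"
    by (intro subset_antisym ideal_gen_subset ideal_gen_mono)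
  then show ?thesis
    unfolding groebner_basis_def using G_I by simp
qed

section \<open>Normality of monomial subrings\<close>

definition lin_form :: "nat \<Rightarrow> (nat \<Rightarrow> 'a::semiring_1) \<Rightarrow> monom \<Rightarrow> 'a" where
  "lin_form n w m = (\<Sum>j<n. of_nat (lookup m j) * w j)"

lemma lin_form_zero [simp]: "lin_form n w 0 = 0"
  unfolding lin_form_def by simp

lemma lin_form_add: "lin_form n w (m + m') = lin_form n w m + lin_form n w m'"
  unfolding lin_form_def by (simp add: lookup_add sum.distrib distrib_right)

lemma lin_form_single: "lin_form n w (single i k) = (if i < n then of_nat k * w i else 0)"
proof -
  have *: "(\<lambda>j. of_nat (lookup (single i k) j) * w j) = (\<lambda>j. if i = j then of_nat k * w i else 0)"
    by (auto simp: lookup_single when_def)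
  show ?thesis unfolding lin_form_def * by simp
qed

definition polyhedral_monoid :: "nat \<Rightarrow> ('i \<Rightarrow> nat \<Rightarrow> int) \<Rightarrow> 'i set \<Rightarrow> monom set" where
  "polyhedral_monoid n c I = {e \<in> monoms_in n. \<forall>i\<in>I. 0 \<le> lin_form n (c i) e}"

lemma polyhedral_monoid_zero: "0 \<in> polyhedral_monoid n c I"
  unfolding polyhedral_monoid_def by simp

lemma polyhedral_monoid_add:
  "e \<in> polyhedral_monoid n c I \<Longrightarrow> e' \<in> polyhedral_monoid n c I \<Longrightarrow> e + e' \<in> polyhedral_monoid n c I"
  unfolding polyhedral_monoid_def by (auto simp: lin_form_add intro: monoms_in_add)

lemma monomial_subring_zero: "0 \<in> monomial_subring C"
  unfolding monomial_subring_def by simp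

lemma monomial_subring_single: "e \<in> C \<Longrightarrow> single e c \<in> monomial_subring C"
  unfolding monomial_subring_def by simp

lemma monomial_subring_add:
  "f \<in> monomial_subring C \<Longrightarrow> g \<in> monomial_subring C \<Longrightarrow> f + g \<in> monomial_subring C"
  unfolding monomial_subring_def using keys_add[of f g] by auto

lemma monomial_subring_uminus: "f \<in> monomial_subring C \<Longrightarrow> - f \<in> monomial_subring C"
  unfolding monomial_subring_def by simp

lemma monomial_subring_diff:
  "f \<in> monomial_subring C \<Longrightarrow> g \<in> monomial_subring C \<Longrightarrow> f - g \<in> monomial_subring C"
  unfolding monomial_subring_def using keys_diff[of f g] by auto

lemma monomial_subring_sum:
  "(\<And>x. x \<in> S \<Longrightarrow> h x \<in> monomial_subring C) \<Longrightarrow> sum h S \<in> monomial_subring C"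
  by (induction S rule: infinite_finite_induct) (simp_all add: monomial_subring_zero monomial_subring_add)

lemma monomial_subring_mult:
  assumes C: "\<And>e e'. e \<in> C \<Longrightarrow> e' \<in> C \<Longrightarrow> e + e' \<in> C"
    and "f \<in> monomial_subring C" "g \<in> monomial_subring C"
  shows "f * g \<in> monomial_subring C"
proof -
  have "x \<in> C" if x: "x \<in> keys (f * g)" for x
  proof -
    obtain u v where "x = u + v" "u \<in> keys f" "v \<in> keys g" using x keys_mult[of f g] by blast
    then show ?thesis using assms unfolding monomial_subring_def by blast
  qed
  then show ?thesis unfolding monomial_subring_def by blast
qed

lemma monomial_subring_of_nat: "0 \<in> C \<Longrightarrow> (of_nat k :: 'k::comm_ring_1 mpoly) \<in> monomial_subring C"
  using monomial_subring_single[of 0 C "of_nat k :: 'k"] by simp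

lemma monomial_subring_power:
  assumes "0 \<in> C" "\<And>e e'. e \<in> C \<Longrightarrow> e' \<in> C \<Longrightarrow> e + e' \<in> C" "f \<in> monomial_subring C"
  shows "f ^ k \<in> monomial_subring C"
proof (induction k)
  case 0
  show ?case using monomial_subring_of_nat[OF assms(1), of 1] by simp
next
  case (Suc k)
  then show ?case using monomial_subring_mult[OF assms(2,3)] by simp
qed

text \<open>The order on \<open>monom\<close> inherited from \<open>Poly_Mapping\<close> is lexicographic with
  variable \<open>0\<close> most significant; it is compatible with addition, and well-founded only on
  monomials in finitely many variables.\<close>

definition lex_lead_monom :: "'k::zero mpoly \<Rightarrow> monom" where
  "lex_lead_monom f = Max (keys f)"

definition lex_lead_coeff :: "'k::zero mpoly \<Rightarrow> 'k" where
  "lex_lead_coeff f = lookup f (lex_lead_monom f)"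

lemma lex_lead_monom_in_keys: "f \<noteq> 0 \<Longrightarrow> lex_lead_monom f \<in> keys f"
  unfolding lex_lead_monom_def by (rule Max_in) auto

lemma lex_lead_monom_max: "m \<in> keys f \<Longrightarrow> m \<le> lex_lead_monom f"
  unfolding lex_lead_monom_def by (rule Max_ge) auto

lemma lex_lead_coeff_nonzero: "f \<noteq> 0 \<Longrightarrow> lex_lead_coeff f \<noteq> 0"
  unfolding lex_lead_coeff_def using lex_lead_monom_in_keys by (simp add: in_keys_iff)

lemma lex_lead_single:
  "c \<noteq> 0 \<Longrightarrow> lex_lead_monom (single e c) = e" "c \<noteq> 0 \<Longrightarrow> lex_lead_coeff (single e c) = c"
  unfolding lex_lead_coeff_def lex_lead_monom_def by simp_all

lemma lex_lead_monom_mem: "f \<in> monomial_subring C \<Longrightarrow> f \<noteq> 0 \<Longrightarrow> lex_lead_monom f \<in> C"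
  using lex_lead_monom_in_keys unfolding monomial_subring_def by blast

lemma lookup_mult_lex_lead:
  fixes f g :: "'k::comm_ring_1 mpoly"
  shows "lookup (f * g) (lex_lead_monom f + lex_lead_monom g) = lex_lead_coeff f * lex_lead_coeff g"
proof -
  define M where "M = lex_lead_monom f + lex_lead_monom g"
  define f' where "f' = f - single (lex_lead_monom f) (lex_lead_coeff f)"
  define g' where "g' = g - single (lex_lead_monom g) (lex_lead_coeff g)"
  have f': "x < lex_lead_monom f" if "x \<in> keys f'" for x
    using that lex_lead_monom_max[of x f] unfolding f'_def lex_lead_coeff_def
    by (auto simp: in_keys_iff lookup_minus lookup_single when_def split: if_splits)
  have g': "x < lex_lead_monom g" if "x \<in> keys g'" for x
    using that lex_lead_monom_max[of x g] unfolding g'_def lex_lead_coeff_def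
    by (auto simp: in_keys_iff lookup_minus lookup_single when_def split: if_splits)
  have lookup_M_zero: "lookup (h * k) M = 0"
    if "\<And>u v. u \<in> keys h \<Longrightarrow> v \<in> keys k \<Longrightarrow> u + v \<noteq> M" for h k :: "'k mpoly"
  proof -
    have "M \<notin> keys (h * k)" using that keys_mult[of h k] by blast
    then show ?thesis by (simp add: in_keys_iff)
  qed
  have "f * g = single (lex_lead_monom f) (lex_lead_coeff f) * single (lex_lead_monom g) (lex_lead_coeff g)
      + single (lex_lead_monom f) (lex_lead_coeff f) * g' + f' * g"
    unfolding f'_def g'_def by (simp add: algebra_simps)
  moreover have "lookup (single (lex_lead_monom f) (lex_lead_coeff f) * g') M = 0"
  proof (rule lookup_M_zero)
    fix u v assume "u \<in> keys (single (lex_lead_monom f) (lex_lead_coeff f))" "v \<in> keys g'"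
    then have "u = lex_lead_monom f" "v < lex_lead_monom g" using g' by (auto split: if_splits)
    then show "u + v \<noteq> M" unfolding M_def using add_strict_left_mono by fastforce
  qed
  moreover have "lookup (f' * g) M = 0"
  proof (rule lookup_M_zero)
    fix u v assume "u \<in> keys f'" "v \<in> keys g"
    then have "u < lex_lead_monom f" "v \<le> lex_lead_monom g" using f' lex_lead_monom_max by auto
    then show "u + v \<noteq> M" unfolding M_def using add_less_le_mono by fastforce
  qed
  ultimately show ?thesis
    by (simp add: lookup_add mult_single M_def)
qed

lemma lex_lead_mult:
  fixes f g :: "'k::idom mpoly"
  assumes f: "f \<noteq> 0" and g: "g \<noteq> 0"
  shows "lex_lead_monom (f * g) = lex_lead_monom f + lex_lead_monom g"
    and "lex_lead_coeff (f * g) = lex_lead_coeff f * lex_lead_coeff g"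
proof -
  let ?M = "lex_lead_monom f + lex_lead_monom g"
  have "x \<le> ?M" if x: "x \<in> keys (f * g)" for x
  proof -
    obtain u v where "x = u + v" "u \<in> keys f" "v \<in> keys g" using x keys_mult[of f g] by blast
    then show ?thesis using lex_lead_monom_max add_mono by blast
  qed
  moreover have "?M \<in> keys (f * g)"
    using lookup_mult_lex_lead[of f g] lex_lead_coeff_nonzero[OF f] lex_lead_coeff_nonzero[OF g]
    by (simp add: in_keys_iff)
  ultimately have "lex_lead_monom (f * g) = ?M"
    unfolding lex_lead_monom_def by (intro Max_eqI) auto
  then show "lex_lead_monom (f * g) = lex_lead_monom f + lex_lead_monom g"
    and "lex_lead_coeff (f * g) = lex_lead_coeff f * lex_lead_coeff g"
    using lookup_mult_lex_lead[of f g] unfolding lex_lead_coeff_def by simp_all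
qed

lemma lookup_lex_lead_power:
  fixes p :: "'k::idom mpoly"
  assumes "p \<noteq> 0"
  shows "lookup (lex_lead_monom (p ^ k)) j = k * lookup (lex_lead_monom p) j"
proof (induction k)
  case 0
  show ?case by (simp add: lex_lead_monom_def)
next
  case (Suc k)
  then show ?case using lex_lead_mult(1)[OF assms, of "p ^ k"] assms by (simp add: lookup_add)
qed

lemma wf_less_monoms_in: "wf {(m, m'). m \<in> monoms_in n \<and> m' \<in> monoms_in n \<and> m < m'}"
proof (rule wf_subset)
  define v where "v m = map (lookup m) [0..<n]" for m :: monom
  show "wf (inv_image (lexn less_than n) v)" by (intro wf_inv_image wf_lexn wf_less_than)
  show "{(m, m'). m \<in> monoms_in n \<and> m' \<in> monoms_in n \<and> m < m'} \<subseteq> inv_image (lexn less_than n) v"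
  proof safe
    fix m m' :: monom
    assume m: "m \<in> monoms_in n" "m' \<in> monoms_in n" "m < m'"
    then obtain k where k: "lookup m k < lookup m' k" "\<And>k'. k' < k \<Longrightarrow> lookup m k' = lookup m' k'"
      by (auto simp: less_poly_mapping.rep_eq less_fun_def)
    have "k < n" using k(1) lookup_monoms_in[OF m(2)] by (metis not_less not_less0)
    then have split: "[0..<n] = [0..<k] @ k # [Suc k..<n]"
      using upt_add_eq_append[of 0 k "n - k"] upt_conv_Cons[of k n] by simp
    let ?pre = "map (lookup m) [0..<k]"
    have "v m = ?pre @ lookup m k # map (lookup m) [Suc k..<n]"
      "v m' = ?pre @ lookup m' k # map (lookup m') [Suc k..<n]"
      "length (v m) = n" "length (v m') = n"
      using k(2) \<open>k < n\<close> unfolding v_def split by simp_all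
    moreover have "(lookup m k, lookup m' k) \<in> less_than" using k(1) by simp
    ultimately show "(m, m') \<in> inv_image (lexn less_than n) v"
      unfolding in_inv_image lexn_conv by blast
  qed
qed

lemma lex_lead_monom_diff_less:
  assumes "lex_lead_monom g = lex_lead_monom f" "lex_lead_coeff g = lex_lead_coeff f" "f - g \<noteq> 0"
  shows "lex_lead_monom (f - g) < lex_lead_monom (f :: 'k::comm_ring_1 mpoly)"
proof -
  have "lex_lead_monom (f - g) \<in> keys f \<union> keys g"
    using lex_lead_monom_in_keys[OF assms(3)] keys_diff[of f g] by blast
  then have "lex_lead_monom (f - g) \<le> lex_lead_monom f"
    using lex_lead_monom_max assms(1) by (metis Un_iff)
  moreover have "lookup (f - g) (lex_lead_monom f) = 0"
    using assms(1,2) unfolding lex_lead_coeff_def by (simp add: lookup_minus)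
  then have "lex_lead_monom (f - g) \<noteq> lex_lead_monom f"
    using lex_lead_monom_in_keys[OF assms(3)] by (auto simp: in_keys_iff)
  ultimately show ?thesis by simp
qed

definition almost_integral :: "'a::comm_ring_1 set \<Rightarrow> nat \<Rightarrow> 'a \<Rightarrow> 'a \<Rightarrow> bool" where
  "almost_integral A N p q \<longleftrightarrow> (\<forall>k. \<exists>r\<in>A. q ^ N * p ^ k = r * q ^ k)"

lemma integral_power_recurrence:
  fixes p q :: "'a::comm_ring_1"
  assumes integral: "p ^ n + (\<Sum>i<n. c i * p ^ i * q ^ (n - i)) = 0" and "n \<le> k"
  shows "r * p ^ k = - (\<Sum>i<n. c i * q ^ (n - i) * (r * p ^ (k - n + i)))"
proof -
  have p_n: "p ^ n = - (\<Sum>i<n. c i * p ^ i * q ^ (n - i))"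
    using integral by (simp add: eq_neg_iff_add_eq_0)
  have "r * p ^ k = r * (p ^ (k - n) * p ^ n)"
    using \<open>n \<le> k\<close> by (simp flip: power_add)
  also have "\<dots> = - (\<Sum>i<n. c i * q ^ (n - i) * (r * p ^ (k - n + i)))"
    unfolding p_n by (simp add: sum_distrib_left mult_ac power_add)
  finally show ?thesis .
qed

lemma integral_imp_almost_integral:
  fixes p q :: "'k::comm_ring_1 mpoly"
  assumes C0: "0 \<in> C" and C_add: "\<And>e e'. e \<in> C \<Longrightarrow> e' \<in> C \<Longrightarrow> e + e' \<in> C"
    and p: "p \<in> monomial_subring C" and q: "q \<in> monomial_subring C" and "0 < n"
    and c: "\<And>i. i < n \<Longrightarrow> c i \<in> monomial_subring C"
    and integral: "p ^ n + (\<Sum>i<n. c i * p ^ i * q ^ (n - i)) = 0"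
  shows "almost_integral (monomial_subring C) (n - 1) p q"
  unfolding almost_integral_def
proof
  let ?A = "monomial_subring C :: 'k mpoly set"
  fix k
  show "\<exists>r\<in>?A. q ^ (n - 1) * p ^ k = r * q ^ k"
  proof (induction k rule: less_induct)
    case (less k)
    show ?case
    proof (cases "k < n")
      case True
      have "q ^ (n - 1) * p ^ k = (q ^ (n - 1 - k) * p ^ k) * q ^ k"
        using True by (simp add: mult_ac flip: power_add)
      moreover have "q ^ (n - 1 - k) * p ^ k \<in> ?A"
        using monomial_subring_power[OF C0 C_add] monomial_subring_mult[OF C_add] p q by blast
      ultimately show ?thesis by blast
    next
      case False
      obtain R where R: "\<And>j. j < k \<Longrightarrow> R j \<in> ?A" "\<And>j. j < k \<Longrightarrow> q ^ (n - 1) * p ^ j = R j * q ^ j"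
        using less by metis
      have "c i * q ^ (n - i) * (q ^ (n - 1) * p ^ (k - n + i)) = c i * R (k - n + i) * q ^ k"
        if i: "i < n" for i
      proof -
        have "c i * q ^ (n - i) * (q ^ (n - 1) * p ^ (k - n + i))
            = c i * R (k - n + i) * (q ^ (n - i) * q ^ (k - n + i))"
          using R(2)[of "k - n + i"] i False by (simp add: mult_ac)
        also have "q ^ (n - i) * q ^ (k - n + i) = q ^ k"
          using i False by (simp flip: power_add)
        finally show ?thesis .
      qed
      then have "q ^ (n - 1) * p ^ k = (- (\<Sum>i<n. c i * R (k - n + i))) * q ^ k"
        using integral_power_recurrence[OF integral, of k "q ^ (n - 1)"] False
        by (simp add: sum_distrib_right)
      moreover have "- (\<Sum>i<n. c i * R (k - n + i)) \<in> ?A"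
        using c R(1) False \<open>0 < n\<close>
        by (intro monomial_subring_uminus monomial_subring_sum monomial_subring_mult[OF C_add]) auto
      ultimately show ?thesis by blast
    qed
  qed
qed

lemma almost_integral_diff_mult:
  fixes p q m :: "'k::comm_ring_1 mpoly"
  assumes C0: "0 \<in> C" and C_add: "\<And>e e'. e \<in> C \<Longrightarrow> e' \<in> C \<Longrightarrow> e + e' \<in> C"
    and ai: "almost_integral (monomial_subring C) N p q" and m: "m \<in> monomial_subring C"
  shows "almost_integral (monomial_subring C) N (p - m * q) q"
  unfolding almost_integral_def
proof
  let ?A = "monomial_subring C :: 'k mpoly set"
  fix k
  obtain R where R: "\<And>j. R j \<in> ?A" "\<And>j. q ^ N * p ^ j = R j * q ^ j"
    using ai unfolding almost_integral_def by metis
  have "q ^ N * (p - m * q) ^ k = q ^ N * (p + (- m) * q) ^ k" by simp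
  also have "\<dots> = (\<Sum>j\<le>k. q ^ N * (of_nat (k choose j) * p ^ j * ((- m) * q) ^ (k - j)))"
    by (subst binomial_ring) (rule sum_distrib_left)
  also have "\<dots> = (\<Sum>j\<le>k. (of_nat (k choose j) * R j * (- m) ^ (k - j)) * q ^ k)"
  proof (rule sum.cong)
    fix j assume "j \<in> {..k}"
    then have jk: "q ^ j * q ^ (k - j) = q ^ k" by (simp flip: power_add)
    have "q ^ N * (of_nat (k choose j) * p ^ j * ((- m) * q) ^ (k - j))
        = of_nat (k choose j) * (q ^ N * p ^ j) * ((- m) ^ (k - j) * q ^ (k - j))"
      unfolding power_mult_distrib by (simp only: mult_ac)
    also have "\<dots> = of_nat (k choose j) * R j * (- m) ^ (k - j) * (q ^ j * q ^ (k - j))"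
      unfolding R(2) by (simp only: mult_ac)
    finally show "q ^ N * (of_nat (k choose j) * p ^ j * ((- m) * q) ^ (k - j))
        = (of_nat (k choose j) * R j * (- m) ^ (k - j)) * q ^ k"
      unfolding jk .
  qed simp
  also have "\<dots> = (\<Sum>j\<le>k. of_nat (k choose j) * R j * (- m) ^ (k - j)) * q ^ k"
    by (simp add: sum_distrib_right)
  finally have "q ^ N * (p - m * q) ^ k = (\<Sum>j\<le>k. of_nat (k choose j) * R j * (- m) ^ (k - j)) * q ^ k" .
  moreover have "(\<Sum>j\<le>k. of_nat (k choose j) * R j * (- m) ^ (k - j)) \<in> ?A"
    by (intro monomial_subring_sum monomial_subring_mult[OF C_add] monomial_subring_of_nat[OF C0]
        monomial_subring_power[OF C0 C_add] monomial_subring_uminus R(1) m)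
  ultimately show "\<exists>r\<in>?A. q ^ N * (p - m * q) ^ k = r * q ^ k" by blast
qed

lemma almost_integral_lex_lead:
  fixes p q :: "'k::idom mpoly"
  assumes ai: "almost_integral (monomial_subring C) N p q" and p: "p \<noteq> 0" and q: "q \<noteq> 0"
  shows "\<exists>e\<in>C. \<forall>j. lookup e j + k * lookup (lex_lead_monom q) j
                    = N * lookup (lex_lead_monom q) j + k * lookup (lex_lead_monom p) j"
proof -
  obtain r where r: "r \<in> monomial_subring C" "q ^ N * p ^ k = r * q ^ k"
    using ai unfolding almost_integral_def by blast
  have r0: "r \<noteq> 0" using r(2) p q by auto
  have "lex_lead_monom (q ^ N * p ^ k) = lex_lead_monom (r * q ^ k)" using r(2) by simp
  then have "lex_lead_monom (q ^ N) + lex_lead_monom (p ^ k) = lex_lead_monom r + lex_lead_monom (q ^ k)"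
    using lex_lead_mult(1) p q r0 by (metis power_not_zero)
  then have "\<forall>j. lookup (lex_lead_monom r) j + k * lookup (lex_lead_monom q) j
              = N * lookup (lex_lead_monom q) j + k * lookup (lex_lead_monom p) j"
    by (metis lookup_add lookup_lex_lead_power p q)
  moreover have "lex_lead_monom r \<in> C" using lex_lead_monom_mem r(1) r0 by blast
  ultimately show ?thesis by blast
qed

lemma ray_coordinate_le:
  fixes x y :: nat
  assumes ray: "\<And>k. \<exists>z. z + k * y = N * y + k * x"
  shows "y \<le> x"
proof (rule ccontr)
  assume "\<not> ?thesis"
  then have lt: "Suc x \<le> y" by simp
  define k where "k = N * y + 1"
  obtain z where e: "z + k * y = N * y + k * x" using ray[of k] by blast
  have "k * Suc x \<le> k * y" using lt by (rule mult_le_mono2)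
  then have "k \<le> N * y" using e by simp
  then show False unfolding k_def by simp
qed

text \<open>The points \<open>N eq + k (ep - eq)\<close> lie in the cone for every \<open>k\<close>, hence so does the direction \<open>ep - eq\<close>.\<close>

lemma polyhedral_monoid_saturated:
  assumes ep: "ep \<in> monoms_in n"
    and ray: "\<And>k. \<exists>e\<in>polyhedral_monoid n c I.
               \<forall>j. lookup e j + k * lookup eq j = N * lookup eq j + k * lookup ep j"
  shows "lookup eq j \<le> lookup ep j" and "ep - eq \<in> polyhedral_monoid n c I"
proof -
  have le: "lookup eq j \<le> lookup ep j" for j
    using ray by (intro ray_coordinate_le) blast
  then show "lookup eq j \<le> lookup ep j" .
  define w where "w = ep - eq"
  have w: "lookup w j = lookup ep j - lookup eq j" for j
    unfolding w_def by (simp add: lookup_minus)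
  have "0 \<le> lin_form n (c i) w" if i: "i \<in> I" for i
  proof (rule ccontr)
    assume neg: "\<not> 0 \<le> lin_form n (c i) w"
    define k where "k = nat (int N * lin_form n (c i) eq) + 1"
    obtain e where e: "e \<in> polyhedral_monoid n c I"
      "\<And>j. lookup e j + k * lookup eq j = N * lookup eq j + k * lookup ep j"
      using ray[of k] by blast
    have "int (lookup e j) = int N * int (lookup eq j) + int k * int (lookup w j)" for j
      using e(2)[of j] le[of j] unfolding w by (simp add: of_nat_diff algebra_simps) (metis of_nat_add of_nat_mult)
    then have "lin_form n (c i) e = int N * lin_form n (c i) eq + int k * lin_form n (c i) w"
      unfolding lin_form_def by (simp add: sum.distrib sum_distrib_left algebra_simps)
    also have "\<dots> \<le> int N * lin_form n (c i) eq - int k"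
      using neg mult_left_mono[of "lin_form n (c i) w" "-1" "int k"] by simp
    also have "\<dots> < 0" unfolding k_def by linarith
    finally show False using e(1) i unfolding polyhedral_monoid_def by auto
  qed
  moreover have "w \<in> monoms_in n" unfolding w_def using ep by (rule monoms_in_diff)
  ultimately show "ep - eq \<in> polyhedral_monoid n c I"
    unfolding polyhedral_monoid_def w_def by blast
qed

lemma polyhedral_division_step:
  fixes p q :: "'k::field mpoly"
  assumes p: "p \<in> monomial_subring (polyhedral_monoid n c I)" "p \<noteq> 0"
    and q: "q \<noteq> 0" and ai: "almost_integral (monomial_subring (polyhedral_monoid n c I)) N p q"
  obtains m where "m \<in> monomial_subring (polyhedral_monoid n c I)"
    "p - m * q = 0 \<or> lex_lead_monom (p - m * q) < lex_lead_monom p"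
proof -
  have "lex_lead_monom p \<in> monoms_in n"
    using lex_lead_monom_mem[OF p] unfolding polyhedral_monoid_def by blast
  note saturated = polyhedral_monoid_saturated[OF this almost_integral_lex_lead[OF ai p(2) q]]
  define w where "w = lex_lead_monom p - lex_lead_monom q"
  define m where "m = single w (lex_lead_coeff p / lex_lead_coeff q)"
  have c: "lex_lead_coeff p / lex_lead_coeff q \<noteq> 0"
    using lex_lead_coeff_nonzero[OF p(2)] lex_lead_coeff_nonzero[OF q] by simp
  have m: "m \<in> monomial_subring (polyhedral_monoid n c I)"
    unfolding m_def w_def using saturated(2) by (rule monomial_subring_single)
  have "w + lex_lead_monom q = lex_lead_monom p"
    unfolding w_def by (rule poly_mapping_eqI) (simp add: lookup_add lookup_minus saturated(1))
  moreover have "m \<noteq> 0" unfolding m_def using c by (metis lookup_single_eq lookup_zero)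
  then have "lex_lead_monom (m * q) = w + lex_lead_monom q"
    "lex_lead_coeff (m * q) = lex_lead_coeff p / lex_lead_coeff q * lex_lead_coeff q"
    using lex_lead_mult[OF _ q] lex_lead_single[OF c] unfolding m_def by simp_all
  ultimately have "lex_lead_monom (m * q) = lex_lead_monom p" "lex_lead_coeff (m * q) = lex_lead_coeff p"
    using lex_lead_coeff_nonzero[OF q] by simp_all
  then have "p - m * q = 0 \<or> lex_lead_monom (p - m * q) < lex_lead_monom p"
    using lex_lead_monom_diff_less by blast
  with m that show ?thesis by blast
qed

lemma almost_integral_dvd:
  fixes p q :: "'k::field mpoly"
  assumes q: "q \<in> monomial_subring (polyhedral_monoid n c I)" "q \<noteq> 0"
  shows "p \<in> monomial_subring (polyhedral_monoid n c I) \<Longrightarrow>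
    almost_integral (monomial_subring (polyhedral_monoid n c I)) N p q \<Longrightarrow>
    \<exists>r\<in>monomial_subring (polyhedral_monoid n c I). p = r * q"
proof (induction p rule: wf_induct[OF wf_inv_image[OF wf_less_monoms_in[of n]], of lex_lead_monom])
  case (1 p)
  let ?P = "polyhedral_monoid n c I"
  let ?A = "monomial_subring ?P :: 'k mpoly set"
  have P_monoid: "0 \<in> ?P" "\<And>e e'. e \<in> ?P \<Longrightarrow> e' \<in> ?P \<Longrightarrow> e + e' \<in> ?P"
    by (simp_all add: polyhedral_monoid_zero polyhedral_monoid_add)
  have lead_in: "lex_lead_monom f \<in> monoms_in n" if "f \<in> ?A" "f \<noteq> 0" for f
    using lex_lead_monom_mem[OF that] unfolding polyhedral_monoid_def by blast
  show ?case
  proof (cases "p = 0")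
    case True
    then show ?thesis using monomial_subring_zero by force
  next
    case False
    obtain m where m: "m \<in> ?A" "p - m * q = 0 \<or> lex_lead_monom (p - m * q) < lex_lead_monom p"
      using polyhedral_division_step[OF "1.prems"(1) False q(2) "1.prems"(2)] by blast
    have p': "p - m * q \<in> ?A" "almost_integral ?A N (p - m * q) q"
      using monomial_subring_diff monomial_subring_mult[OF P_monoid(2)]
        almost_integral_diff_mult[OF P_monoid] "1.prems" m(1) q(1) by blast+
    show ?thesis
    proof (cases "p - m * q = 0")
      case True
      then show ?thesis using m(1) by (intro bexI[of _ m]) simp_all
    next
      case False
      then have "(p - m * q, p) \<in> inv_image {(m, m'). m \<in> monoms_in n \<and> m' \<in> monoms_in n \<and> m < m'}
                                   lex_lead_monom"
        using m(2) lead_in[OF p'(1)] lead_in[OF "1.prems"(1) \<open>p \<noteq> 0\<close>] by simp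
      then obtain r where r: "r \<in> ?A" "p - m * q = r * q" using "1.IH" p' by blast
      have "p = (r + m) * q" using r(2) by (simp add: algebra_simps)
      moreover have "r + m \<in> ?A" using r(1) m(1) by (rule monomial_subring_add)
      ultimately show ?thesis by blast
    qed
  qed
qed

theorem normal_subring_polyhedral_monoid:
  "normal_subring (monomial_subring (polyhedral_monoid n c I) :: 'k::field mpoly set)"
  unfolding normal_subring_def
proof (intro ballI impI)
  let ?P = "polyhedral_monoid n c I"
  fix p q :: "'k mpoly"
  assume p: "p \<in> monomial_subring ?P" and q: "q \<in> monomial_subring ?P" "q \<noteq> 0"
  assume "\<exists>k>0. \<exists>c. (\<forall>i<k. c i \<in> monomial_subring ?P) \<and> p ^ k + (\<Sum>i<k. c i * p ^ i * q ^ (k - i)) = 0"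
  then obtain k a where "0 < k" "\<And>i. i < k \<Longrightarrow> a i \<in> monomial_subring ?P"
    "p ^ k + (\<Sum>i<k. a i * p ^ i * q ^ (k - i)) = 0"
    by blast
  then have "almost_integral (monomial_subring ?P) (k - 1) p q"
    using integral_imp_almost_integral[OF polyhedral_monoid_zero polyhedral_monoid_add p q(1)] by blast
  then show "\<exists>r\<in>monomial_subring ?P. p = r * q"
    using almost_integral_dvd[OF q p] by blast
qed

section \<open>The Rees map as a monomial map\<close>

definition monom3 :: "nat \<Rightarrow> nat \<Rightarrow> nat \<Rightarrow> monom" where
  "monom3 x y z = single 0 x + single 1 y + single 2 z"

lemma lookup_monom3:
  "lookup (monom3 x y z) j = (if j = 0 then x else if j = 1 then y else if j = 2 then z else 0)"
  unfolding monom3_def by (simp add: lookup_add lookup_single when_def)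

lemma monom3_add: "monom3 x y z + monom3 x' y' z' = monom3 (x + x') (y + y') (z + z')"
  unfolding monom3_def by (simp add: single_add ac_simps)

lemma monom3_eq_iff: "monom3 x y z = monom3 x' y' z' \<longleftrightarrow> x = x' \<and> y = y' \<and> z = z'"
proof
  assume "monom3 x y z = monom3 x' y' z'"
  then have "lookup (monom3 x y z) j = lookup (monom3 x' y' z') j" for j by simp
  from this[of 0] this[of 1] this[of 2] show "x = x' \<and> y = y' \<and> z = z'"
    by (simp add: lookup_monom3)
qed simp

lemma monoms_in_monom3: "3 \<le> n \<Longrightarrow> monom3 x y z \<in> monoms_in n"
  unfolding monom3_def by (intro monoms_in_add monoms_in_single) auto

lemma monom3_lookup: "(\<And>j. 3 \<le> j \<Longrightarrow> lookup e j = 0) \<Longrightarrow> e = monom3 (lookup e 0) (lookup e 1) (lookup e 2)"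
  by (rule poly_mapping_eqI) (auto simp: lookup_monom3)

lemma lin_form_monom3:
  "3 \<le> n \<Longrightarrow> lin_form n w (monom3 x y z) = of_nat x * w 0 + of_nat y * w 1 + of_nat z * w 2"
  unfolding monom3_def by (simp add: lin_form_add lin_form_single)

lemma mon_monom3_power: "(mon (monom3 x y z) :: 'k::comm_ring_1 mpoly) ^ k = mon (monom3 (k * x) (k * y) (k * z))"
proof (induction k)
  case 0
  show ?case by (simp add: mon_def monom3_def)
next
  case (Suc k)
  then show ?case by (simp add: mon_mult monom3_add)
qed

lemma prod_mon_monom3:
  "finite J \<Longrightarrow> (\<Prod>j\<in>J. (mon (monom3 (x j) (y j) (z j)) :: 'k::comm_ring_1 mpoly))
     = mon (monom3 (\<Sum>j\<in>J. x j) (\<Sum>j\<in>J. y j) (\<Sum>j\<in>J. z j))"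
proof (induction J rule: finite_induct)
  case empty
  show ?case by (simp add: mon_def monom3_def)
next
  case (insert j J)
  then show ?case by (simp add: mon_mult monom3_add)
qed

definition rees_x_exp :: "nat \<Rightarrow> nat \<Rightarrow> nat" where
  "rees_x_exp d j = (if j = 0 then 1 else if j = 1 then 0 else d - (j - 2))"

definition rees_y_exp :: "(nat \<Rightarrow> nat) \<Rightarrow> nat \<Rightarrow> nat" where
  "rees_y_exp a j = (if j = 0 then 0 else if j = 1 then 1 else a (j - 2))"

definition rees_t_exp :: "nat \<Rightarrow> nat" where
  "rees_t_exp j = (if j \<le> 1 then 0 else 1)"

lemma rees_exp_simps [simp]:
  "rees_x_exp d 0 = 1" "rees_x_exp d (Suc 0) = 0" "rees_x_exp d (Suc (Suc j)) = d - j"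
  "rees_y_exp a 0 = 0" "rees_y_exp a (Suc 0) = 1" "rees_y_exp a (Suc (Suc j)) = a j"
  "rees_t_exp 0 = 0" "rees_t_exp (Suc 0) = 0" "rees_t_exp (Suc (Suc j)) = 1"
  by (simp_all add: rees_x_exp_def rees_y_exp_def rees_t_exp_def)

definition rees_exp :: "nat \<Rightarrow> (nat \<Rightarrow> nat) \<Rightarrow> monom \<Rightarrow> monom" where
  "rees_exp d a m = monom3 (lin_form (d + 3) (rees_x_exp d) m) (lin_form (d + 3) (rees_y_exp a) m)
                           (lin_form (d + 3) rees_t_exp m)"

lemma rees_exp_add: "rees_exp d a (m + m') = rees_exp d a m + rees_exp d a m'"
  unfolding rees_exp_def by (simp add: lin_form_add monom3_add)

lemma rees_map_eq_monomial_image: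
  assumes f: "f \<in> polys_in (d + 3)"
  shows "rees_map d a f = (monomial_image (rees_exp d a) f :: 'k::comm_ring_1 mpoly)"
proof -
  have var: "(if j = 0 then Var 0 else if j = 1 then Var 1
              else Var 0 ^ (d - (j - 2)) * Var 1 ^ a (j - 2) * Var 2)
           = (mon (monom3 (rees_x_exp d j) (rees_y_exp a j) (rees_t_exp j)) :: 'k mpoly)" for j
  proof -
    have "Var 0 = (mon (monom3 1 0 0) :: 'k mpoly)" "Var 1 = (mon (monom3 0 1 0) :: 'k mpoly)"
      "Var 2 = (mon (monom3 0 0 1) :: 'k mpoly)"
      by (simp_all add: Var_eq_mon monom3_def)
    then show ?thesis
      by (auto simp: rees_x_exp_def rees_y_exp_def rees_t_exp_def mon_monom3_power mon_mult monom3_add)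
  qed
  have lin_keys: "(\<Sum>j\<in>keys m. lookup m j * w j) = lin_form (d + 3) w m"
    if "m \<in> keys f" for m and w :: "nat \<Rightarrow> nat"
    unfolding lin_form_def of_nat_id
    by (rule sum.mono_neutral_left) (use f that in \<open>auto simp: polys_in_def in_keys_iff\<close>)
  have "rees_map d a f = (\<Sum>m\<in>keys f. single 0 (lookup f m) * (mon (rees_exp d a m) :: 'k mpoly))"
    unfolding rees_map_def subst_def var
    by (intro sum.cong refl)
      (simp add: mon_monom3_power prod_mon_monom3 rees_exp_def lin_keys)
  then show ?thesis
    unfolding monomial_image_def by (simp add: mon_def mult_single)
qed

lemma rees_kernel_eq: "rees_kernel d a = {f \<in> polys_in (d + 3). monomial_image (rees_exp d a) f = 0}"
  unfolding rees_kernel_def by (auto simp: rees_map_eq_monomial_image)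

lemma rees_algebra_eq: "rees_algebra d a = monomial_subring (rees_exp d a ` monoms_in (d + 3))"
proof -
  have "rees_map d a ` polys_in (d + 3) = monomial_image (rees_exp d a) ` polys_in (d + 3)"
    by (rule image_cong) (simp_all add: rees_map_eq_monomial_image)
  then show ?thesis unfolding rees_algebra_def monomial_image_range .
qed

section \<open>The binomials and their standard monomials\<close>

text \<open>Variable \<open>i + 2\<close> is \<open>T_i\<close>; these are the exponent vectors of \<open>x T_i\<close>, \<open>y^(b_i) T_(i-1)\<close>,
  \<open>T_i T_(j-1)\<close> and \<open>y^(b_i - b_j) T_(i-1) T_j\<close>.\<close>

definition lin_lead :: "nat \<Rightarrow> monom" where
  "lin_lead i = single 0 1 + single (i + 2) 1"

definition lin_trail :: "(nat \<Rightarrow> nat) \<Rightarrow> nat \<Rightarrow> monom" where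
  "lin_trail a i = single 1 (diff_seq a i) + single (i + 1) 1"

definition quad_lead :: "nat \<Rightarrow> nat \<Rightarrow> monom" where
  "quad_lead i j = single (i + 2) 1 + single (j + 1) 1"

definition quad_trail :: "(nat \<Rightarrow> nat) \<Rightarrow> nat \<Rightarrow> nat \<Rightarrow> monom" where
  "quad_trail a i j = single 1 (diff_seq a i - diff_seq a j) + single (i + 1) 1 + single (j + 2) 1"

definition rees_binomials :: "nat \<Rightarrow> (nat \<Rightarrow> nat) \<Rightarrow> (monom \<times> monom) set" where
  "rees_binomials d a = {(lin_lead i, lin_trail a i) | i. 1 \<le> i \<and> i \<le> d} \<union>
                        {(quad_lead i j, quad_trail a i j) | i j. j < i \<and> i \<le> d \<and> 1 \<le> j}"

lemma rees_binomialsE: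
  assumes "(L, R) \<in> rees_binomials d a"
  obtains (lin) i where "1 \<le> i" "i \<le> d" "L = lin_lead i" "R = lin_trail a i"
  | (quad) i j where "j < i" "i \<le> d" "1 \<le> j" "L = quad_lead i j" "R = quad_trail a i j"
  using assms unfolding rees_binomials_def by blast

lemma Var_Tv_eq_mon: "(Var 0 * Tv i :: 'k::comm_ring_1 mpoly) = mon (lin_lead i)"
  unfolding lin_lead_def by (simp add: Tv_eq_mon Var_eq_mon mon_mult)

lemma Tv_Tv_eq_mon: "1 \<le> j \<Longrightarrow> (Tv i * Tv (j - 1) :: 'k::comm_ring_1 mpoly) = mon (quad_lead i j)"
  unfolding quad_lead_def by (simp add: Tv_eq_mon mon_mult)

lemma gb_linear_eq: "1 \<le> i \<Longrightarrow> gb_linear a i = (mon (lin_lead i) - mon (lin_trail a i) :: 'k::comm_ring_1 mpoly)"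
  unfolding gb_linear_def lin_lead_def lin_trail_def
  by (simp only: Var_power) (simp add: Tv_eq_mon Var_eq_mon mon_mult)

lemma gb_quad_eq:
  "1 \<le> j \<Longrightarrow> j < i \<Longrightarrow> gb_quad a i j = (mon (quad_lead i j) - mon (quad_trail a i j) :: 'k::comm_ring_1 mpoly)"
  unfolding gb_quad_def quad_lead_def quad_trail_def
  by (simp only: Var_power) (simp add: Tv_eq_mon mon_mult add.assoc)

lemma gb_set_eq: "(gb_set d a :: 'k::comm_ring_1 mpoly set) = (\<lambda>(L, R). mon L - mon R) ` rees_binomials d a"
proof (intro equalityI subsetI)
  fix g :: "'k mpoly"
  assume "g \<in> gb_set d a"
  then consider (lin) i where "1 \<le> i" "i \<le> d" "g = gb_linear a i"
    | (quad) i j where "j < i" "i \<le> d" "1 \<le> j" "g = gb_quad a i j"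
    unfolding gb_set_def by blast
  then show "g \<in> (\<lambda>(L, R). mon L - mon R) ` rees_binomials d a"
  proof cases
    case lin
    then show ?thesis unfolding rees_binomials_def
      by (intro image_eqI[where x = "(lin_lead i, lin_trail a i)"]) (auto simp: gb_linear_eq)
  next
    case quad
    then show ?thesis unfolding rees_binomials_def
      by (intro image_eqI[where x = "(quad_lead i j, quad_trail a i j)"]) (auto simp: gb_quad_eq)
  qed
next
  fix g :: "'k mpoly"
  assume "g \<in> (\<lambda>(L, R). mon L - mon R) ` rees_binomials d a"
  then obtain L R where LR: "(L, R) \<in> rees_binomials d a" and g: "g = mon L - mon R" by auto
  from LR show "g \<in> gb_set d a"
  proof (cases rule: rees_binomialsE)
    case (lin i)
    then have "g = gb_linear a i" using g gb_linear_eq[where a = a, OF lin(1)] by metis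
    then show ?thesis unfolding gb_set_def using lin by blast
  next
    case (quad i j)
    then have "g = gb_quad a i j" using g gb_quad_eq[where a = a, OF quad(3,1)] by metis
    then show ?thesis unfolding gb_set_def using quad by blast
  qed
qed

text \<open>The squared \<open>T\<close>-indices make the weight strictly convex in the index, so that moving two
  indices towards each other decreases it.\<close>

definition rees_weight :: "nat \<Rightarrow> monom \<Rightarrow> nat" where
  "rees_weight d = lin_form (d + 3) (\<lambda>j. if j = 0 then 1 else if j = 1 then 0 else (j - 2)\<^sup>2)"

lemma rees_weight_add: "rees_weight d (m + u) = rees_weight d m + rees_weight d u"
  unfolding rees_weight_def by (rule lin_form_add)

lemma split_two_vars:
  fixes m :: monom
  assumes "0 < lookup m p" "0 < lookup m q" "p \<noteq> q"
  shows "m = (single p 1 + single q 1) + (m - single p 1 - single q 1)"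
proof (rule poly_mapping_eqI)
  fix k
  show "lookup m k = lookup ((single p 1 + single q 1) + (m - single p 1 - single q 1)) k"
    using assms by (cases "k = p"; cases "k = q") (simp_all add: lookup_add lookup_minus lookup_single)
qed

lemma standard_rees_monomD:
  assumes std: "standard_monom (rees_binomials d a) s"
  shows "0 < lookup s 0 \<Longrightarrow> 1 \<le> i \<Longrightarrow> i \<le> d \<Longrightarrow> lookup s (i + 2) = 0"
    and "2 \<le> q \<Longrightarrow> q + 2 \<le> p \<Longrightarrow> p \<le> d + 2 \<Longrightarrow> 0 < lookup s p \<Longrightarrow> lookup s q = 0"
proof -
  show "lookup s (i + 2) = 0" if "0 < lookup s 0" "1 \<le> i" "i \<le> d"
  proof (rule ccontr)
    assume "lookup s (i + 2) \<noteq> 0"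
    then have "s = lin_lead i + (s - single 0 1 - single (i + 2) 1)"
      unfolding lin_lead_def using that by (intro split_two_vars) auto
    then show False using std that unfolding standard_monom_def rees_binomials_def by blast
  qed
  show "lookup s q = 0" if "2 \<le> q" "q + 2 \<le> p" "p \<le> d + 2" "0 < lookup s p"
  proof (rule ccontr)
    assume nz: "lookup s q \<noteq> 0"
    have pq: "p - 2 + 2 = p" "q - 1 + 1 = q" using that by auto
    have "s = quad_lead (p - 2) (q - 1) + (s - single p 1 - single q 1)"
      unfolding quad_lead_def pq using that nz by (intro split_two_vars) auto
    moreover have "q - 1 < p - 2" "p - 2 \<le> d" "1 \<le> q - 1" using that by auto
    ultimately show False using std unfolding standard_monom_def rees_binomials_def by blast
  qed
qed

lemma standard_rees_monom_consecutive:
  assumes s: "s \<in> monoms_in (d + 3)" and std: "standard_monom (rees_binomials d a) s"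
    and s0: "lookup s 0 = 0" and first: "0 < lookup s (k + 2)"
    and below: "\<And>j. 2 \<le> j \<Longrightarrow> j < k + 2 \<Longrightarrow> lookup s j = 0"
  shows "s = single 1 (lookup s 1) + single (k + 2) (lookup s (k + 2)) + single (k + 3) (lookup s (k + 3))"
proof (rule poly_mapping_eqI)
  have above: "lookup s j = 0" if "k + 4 \<le> j" for j
  proof (cases "j \<le> d + 2")
    case True
    show ?thesis
    proof (rule ccontr)
      assume "lookup s j \<noteq> 0"
      then have "lookup s (k + 2) = 0" using standard_rees_monomD(2)[OF std, of "k + 2" j] True that by simp
      then show False using first by simp
    qed
  next
    case False
    then show ?thesis using lookup_monoms_in[OF s] by simp
  qed
  fix i
  consider "i = 0" | "i = 1" | "2 \<le> i \<and> i < k + 2" | "i = k + 2" | "i = k + 3" | "k + 4 \<le> i"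
    by linarith
  then show "lookup s i = lookup (single 1 (lookup s 1) + single (k + 2) (lookup s (k + 2))
                                  + single (k + 3) (lookup s (k + 3))) i"
    by cases (use s0 below above in \<open>auto simp: lookup_add lookup_single when_def\<close>)
qed

lemma standard_rees_monom_cases:
  assumes s: "s \<in> monoms_in (d + 3)" and std: "standard_monom (rees_binomials d a) s"
  obtains (monom3) X Y D where "s = monom3 X Y D"
  | (consecutive) Y k P Q where "s = single 1 Y + single (k + 2) P + single (k + 3) Q"
      "0 < P" "k \<le> d" "Q = 0 \<or> k + 1 \<le> d" "0 < k \<or> 0 < Q"
proof (cases "\<forall>j\<ge>3. lookup s j = 0")
  case True
  then show ?thesis using monom3 monom3_lookup by blast
next
  case False
  then obtain j where j: "3 \<le> j" "0 < lookup s j" by auto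
  have "j < d + 3" using j(2) lookup_monoms_in[OF s, of j] by (cases "j < d + 3") auto
  have s0: "lookup s 0 = 0"
  proof (rule ccontr)
    assume "lookup s 0 \<noteq> 0"
    then have "lookup s (j - 2 + 2) = 0"
      using standard_rees_monomD(1)[OF std, of "j - 2"] j \<open>j < d + 3\<close> by simp
    moreover have "j - 2 + 2 = j" using j(1) by simp
    ultimately show False using j(2) by simp
  qed
  define k0 where "k0 = (LEAST j. 2 \<le> j \<and> 0 < lookup s j)"
  have k0: "2 \<le> k0" "0 < lookup s k0" "k0 \<le> j"
    using LeastI[of "\<lambda>j. 2 \<le> j \<and> 0 < lookup s j" j] Least_le[of "\<lambda>j. 2 \<le> j \<and> 0 < lookup s j" j] j
    unfolding k0_def by auto
  define k where "k = k0 - 2"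
  have k_eq: "k0 = k + 2" using k0(1) unfolding k_def by arith
  then have k: "0 < lookup s (k + 2)" using k0(2) by simp
  have below: "lookup s j' = 0" if "2 \<le> j'" "j' < k + 2" for j'
    using not_less_Least[of j' "\<lambda>j. 2 \<le> j \<and> 0 < lookup s j"] that k_eq unfolding k0_def by auto
  note s_eq = standard_rees_monom_consecutive[OF s std s0 k below]
  moreover have "k \<le> d" using k_eq k0(3) \<open>j < d + 3\<close> by simp
  moreover have "lookup s (k + 3) = 0 \<or> k + 1 \<le> d" using lookup_monoms_in[OF s, of "k + 3"] by linarith
  moreover have "0 < k \<or> 0 < lookup s (k + 3)"
  proof (rule ccontr)
    assume "\<not> ?thesis"
    then have "k = 0" "lookup s 3 = 0" by auto
    then have "lookup s j = 0"
      using arg_cong[OF s_eq, of "\<lambda>m. lookup m j"] j(1) by (auto simp: lookup_add lookup_single when_def)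
    then show False using j(2) by simp
  qed
  ultimately show ?thesis using consecutive k by blast
qed

text \<open>A standard monomial is \<open>x^X y^Y T_0^D\<close> or \<open>y^Y T_k^P T_(k+1)^Q\<close>; the latter has image
  \<open>x^X y^_ t^D\<close> with \<open>D d - X = D k + Q\<close>, so \<open>k\<close> and \<open>Q\<close> are recovered by division by \<open>D\<close>.\<close>

definition rees_lift :: "nat \<Rightarrow> (nat \<Rightarrow> nat) \<Rightarrow> monom \<Rightarrow> monom" where
  "rees_lift d a e =
     (let X = lookup e 0; Y = lookup e 1; D = lookup e 2; k = (D * d - X) div D; q = (D * d - X) mod D
      in if D * d \<le> X then monom3 (X - D * d) Y D
         else single 1 (Y - ((D - q) * a k + q * a (k + 1))) + single (k + 2) (D - q) + single (k + 3) q)"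

lemma rees_lift_monom3: "D * d \<le> X \<Longrightarrow> rees_lift d a (monom3 X Y D) = monom3 (X - D * d) Y D"
  unfolding rees_lift_def by (simp add: lookup_monom3)

lemma rees_lift_consecutive:
  assumes "\<not> D * d \<le> X" "D * d - X = D * k + q" "q < D"
  shows "rees_lift d a (monom3 X Y D)
    = single 1 (Y - ((D - q) * a k + q * a (k + 1))) + single (k + 2) (D - q) + single (k + 3) q"
proof -
  have "(D * k + q) div D = k" "(D * k + q) mod D = q" using assms(3) by auto
  then show ?thesis unfolding rees_lift_def using assms by (simp add: lookup_monom3)
qed

lemma rees_binomials_weight:
  assumes "(L, R) \<in> rees_binomials d a"
  shows "L \<in> monoms_in (d + 3) \<and> R \<in> monoms_in (d + 3) \<and> rees_weight d R < rees_weight d L"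
  using assms
proof (cases rule: rees_binomialsE)
  case (lin i)
  then obtain i' where "i = Suc i'" by (cases i) auto
  moreover have "i' * i' \<le> Suc i' * Suc i'" by simp
  ultimately show ?thesis
    using lin unfolding lin_lead_def lin_trail_def rees_weight_def
    by (auto intro!: monoms_in_add monoms_in_single simp: lin_form_add lin_form_single power2_eq_square)
next
  case (quad i j)
  then obtain i' j' where ij: "i = Suc i'" "j = Suc j'" by (cases i; cases j) auto
  then have "i' * i' + j * j < i * i + j' * j'" using quad by (simp add: algebra_simps)
  then show ?thesis
    using quad ij unfolding quad_lead_def quad_trail_def rees_weight_def
    by (auto intro!: monoms_in_add monoms_in_single simp: lin_form_add lin_form_single power2_eq_square)
qed

lemma rees_binomial_lead:
  assumes ord: "term_order (d + 3) ord"
    and init_lin: "\<And>i. 1 \<le> i \<Longrightarrow> i \<le> d \<Longrightarrow>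
      lead_monom ord (gb_linear a i :: 'k::comm_ring_1 mpoly) = lead_monom ord (Var 0 * Tv i :: 'k mpoly)"
    and init_quad: "\<And>i j. j < i \<Longrightarrow> i \<le> d \<Longrightarrow> 1 \<le> j \<Longrightarrow>
      lead_monom ord (gb_quad a i j :: 'k mpoly) = lead_monom ord (Tv i * Tv (j - 1) :: 'k mpoly)"
    and LR: "(L, R) \<in> rees_binomials d a"
  shows "ord R L"
proof -
  have L: "L \<in> monoms_in (d + 3)" "R \<in> monoms_in (d + 3)" "L \<noteq> R"
    using rees_binomials_weight[OF LR] by auto
  from LR have "lead_monom ord (mon L - mon R :: 'k mpoly) = lead_monom ord (mon L :: 'k mpoly)"
  proof (cases rule: rees_binomialsE)
    case (lin i)
    then show ?thesis
      using init_lin[OF lin(1,2), unfolded gb_linear_eq[OF lin(1)] Var_Tv_eq_mon] by simp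
  next
    case (quad i j)
    then show ?thesis
      using init_quad[OF quad(1-3), unfolded gb_quad_eq[OF quad(3,1)] Tv_Tv_eq_mon[OF quad(3)]] by simp
  qed
  also have "\<dots> = L" using lead_monom_mon[OF ord L(1)] .
  finally show ?thesis using lead_monom_binomial_iff[OF ord L(3,1,2)] by blast
qed

lemma rees_exp_consecutive:
  assumes "k \<le> d" "Q = 0 \<or> k + 1 \<le> d"
  shows "rees_exp d a (single 1 Y + single (k + 2) P + single (k + 3) Q)
       = monom3 (P * (d - k) + Q * (d - (k + 1))) (Y + (P * a k + Q * a (k + 1))) (P + Q)"
proof -
  have "lin_form (d + 3) w (single 1 Y + single (k + 2) P + single (k + 3) Q)
      = Y * w 1 + P * w (k + 2) + Q * w (k + 3)" for w :: "nat \<Rightarrow> nat"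
    using assms by (auto simp: lin_form_add lin_form_single)
  then show ?thesis
    unfolding rees_exp_def by (simp add: rees_x_exp_def rees_y_exp_def rees_t_exp_def add.assoc)
qed

lemma consecutive_exponent_identity:
  fixes D q k d :: nat
  assumes "q \<le> D" "k \<le> d" "q = 0 \<or> k + 1 \<le> d"
  shows "D * d = (D - q) * (d - k) + q * (d - (k + 1)) + (D * k + q)"
proof -
  obtain t where t: "D = q + t" using assms(1) le_Suc_ex by blast
  show ?thesis
  proof (cases "q = 0")
    case True
    obtain r where "d = k + r" using assms(2) le_Suc_ex by blast
    then show ?thesis using True by (simp add: algebra_simps)
  next
    case False
    then obtain r where "d = k + 1 + r" using assms(3) le_Suc_ex by blast
    then show ?thesis using t by (simp add: algebra_simps)
  qed
qed

lemma quotient_bounds: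
  fixes D d X k q :: nat
  assumes "D * d = X + (D * k + q)" "0 < D"
  shows "k \<le> d" "q = 0 \<or> k + 1 \<le> d"
proof -
  have "D * k \<le> D * d" using assms(1) by linarith
  then show "k \<le> d" using assms(2) by simp
  show "q = 0 \<or> k + 1 \<le> d"
  proof (cases "q = 0")
    case False
    then have "D * k < D * d" using assms(1) by linarith
    then show ?thesis by simp
  qed simp
qed

text \<open>The form with coefficients \<open>rees_cone_coeff d a i\<close> vanishes at the exponents
  \<open>(d - i + 1, a_(i-1), 1)\<close> and \<open>(d - i, a_i, 1)\<close> of two consecutive generators of \<open>L t\<close>.\<close>

definition rees_cone_coeff :: "nat \<Rightarrow> (nat \<Rightarrow> nat) \<Rightarrow> nat \<Rightarrow> nat \<Rightarrow> int" where
  "rees_cone_coeff d a i j = (if j = 0 then int (diff_seq a i) else if j = 1 then 1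
     else if j = 2 then - (int (a i) + int (diff_seq a i) * int (d - i)) else 0)"

definition rees_cone :: "nat \<Rightarrow> (nat \<Rightarrow> nat) \<Rightarrow> monom set" where
  "rees_cone d a = polyhedral_monoid 3 (rees_cone_coeff d a) {1..d}"

lemma lin_form_rees_cone_coeff:
  "lin_form 3 (rees_cone_coeff d a i) e = int (lookup e 1) + int (diff_seq a i) * int (lookup e 0)
     - int (lookup e 2) * (int (a i) + int (diff_seq a i) * int (d - i))"
  unfolding lin_form_def rees_cone_coeff_def by (simp add: numeral_3_eq_3 numeral_2_eq_2 lessThan_Suc algebra_simps)

section \<open>Convex exponent sequences\<close>

locale convex_exponents =
  fixes d :: nat and a :: "nat \<Rightarrow> nat"
  assumes a0: "a 0 = 0"
    and a_incr: "\<And>i. 1 \<le> i \<Longrightarrow> i \<le> d \<Longrightarrow> a (i - 1) < a i"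
    and diff_seq_incr: "\<And>i. 1 \<le> i \<Longrightarrow> i + 1 \<le> d \<Longrightarrow> diff_seq a i \<le> diff_seq a (i + 1)"
begin

lemma a_step: "1 \<le> i \<Longrightarrow> i \<le> d \<Longrightarrow> a i = a (i - 1) + diff_seq a i"
  using a_incr[of i] unfolding diff_seq_def by simp

lemma diff_seq_mono:
  assumes "1 \<le> i" "i \<le> j" "j \<le> d"
  shows "diff_seq a i \<le> diff_seq a j"
  using assms(2,3)
proof (induction j rule: dec_induct)
  case base
  show ?case by simp
next
  case (step n)
  then show ?case using diff_seq_incr[of n] assms(1) by simp
qed

lemma above_tangent_right:
  assumes "1 \<le> i" "i \<le> l" "l \<le> d"
  shows "a i + (l - i) * diff_seq a i \<le> a l"
  using assms(2,3)
proof (induction l rule: dec_induct)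
  case base
  show ?case by simp
next
  case (step n)
  have "a (Suc n) = a n + diff_seq a (Suc n)" using a_step[of "Suc n"] step by simp
  moreover have "diff_seq a i \<le> diff_seq a (Suc n)" using diff_seq_mono[OF assms(1)] step by simp
  moreover have "Suc n - i = Suc (n - i)" using step by simp
  ultimately show ?case using step by simp
qed

lemma above_tangent_left:
  assumes "1 \<le> i" "l \<le> i" "i \<le> d"
  shows "a i \<le> a l + (i - l) * diff_seq a i"
  using assms(2)
proof (induction l rule: inc_induct)
  case base
  show ?case by simp
next
  case (step n)
  have "a (Suc n) = a n + diff_seq a (Suc n)" using a_step[of "Suc n"] step assms by simp
  moreover have "diff_seq a (Suc n) \<le> diff_seq a i" using diff_seq_mono[of "Suc n" i] step assms by simp
  moreover have "i - n = Suc (i - Suc n)" using step by simp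
  ultimately show ?case using step by simp
qed

lemma above_tangent:
  assumes "1 \<le> i" "i \<le> d" "l \<le> d"
  shows "int (a i) + int (diff_seq a i) * (int l - int i) \<le> int (a l)"
proof (cases "i \<le> l")
  case True
  have "int (a i) + int (l - i) * int (diff_seq a i) \<le> int (a l)"
    using above_tangent_right[OF assms(1) True assms(3)]
    by (simp only: of_nat_add[symmetric] of_nat_mult[symmetric] of_nat_le_iff)
  moreover have "int (l - i) = int l - int i" using True by simp
  ultimately show ?thesis by (simp add: algebra_simps)
next
  case False
  have "int (a i) \<le> int (a l) + int (i - l) * int (diff_seq a i)"
    using above_tangent_left[OF assms(1) _ assms(2), of l] False
    by (simp only: of_nat_add[symmetric] of_nat_mult[symmetric] of_nat_le_iff)
  moreover have "int (i - l) = int i - int l" using False by simp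
  ultimately show ?thesis by (simp add: algebra_simps)
qed

lemma rees_exp_binomial:
  assumes "(L, R) \<in> rees_binomials d a"
  shows "rees_exp d a L = rees_exp d a R"
  using assms
proof (cases rule: rees_binomialsE)
  case (lin i)
  then obtain i' where i: "i = Suc i'" by (cases i) auto
  have "a i = a i' + diff_seq a i" using a_step lin i by simp
  then show ?thesis
    using lin i unfolding rees_exp_def lin_lead_def lin_trail_def monom3_eq_iff
    by (simp add: lin_form_add lin_form_single)
next
  case (quad i j)
  then obtain i' j' where ij: "i = Suc i'" "j = Suc j'" by (cases i; cases j) auto
  have "a i = a i' + diff_seq a i" "a j = a j' + diff_seq a j" "diff_seq a j \<le> diff_seq a i"
    using a_step[of i] a_step[of j] diff_seq_mono[of j i] quad ij by simp_all
  then show ?thesis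
    using quad ij unfolding rees_exp_def quad_lead_def quad_trail_def monom3_eq_iff
    by (simp add: lin_form_add lin_form_single)
qed

lemma rees_exp_monom3: "rees_exp d a (monom3 X Y D) = monom3 (X + D * d) Y D"
  unfolding rees_exp_def
  by (simp add: lin_form_monom3 rees_x_exp_def rees_y_exp_def rees_t_exp_def a0 monom3_eq_iff)

lemma rees_lift_rees_exp:
  assumes "s \<in> monoms_in (d + 3)" "standard_monom (rees_binomials d a) s"
  shows "rees_lift d a (rees_exp d a s) = s"
  using assms
proof (cases rule: standard_rees_monom_cases)
  case (monom3 X Y D)
  then show ?thesis by (simp add: rees_exp_monom3 rees_lift_monom3)
next
  case (consecutive Y k P Q)
  let ?X = "P * (d - k) + Q * (d - (k + 1))"
  have "(P + Q) * d = ?X + ((P + Q) * k + Q)"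
    using consecutive_exponent_identity[of Q "P + Q" k d] consecutive by simp
  moreover have "0 < (P + Q) * k + Q" using consecutive by auto
  ultimately have "rees_lift d a (monom3 ?X (Y + (P * a k + Q * a (k + 1))) (P + Q))
      = single 1 Y + single (k + 2) P + single (k + 3) Q"
    using rees_lift_consecutive[of "P + Q" d ?X k Q] consecutive by simp
  then show ?thesis using consecutive rees_exp_consecutive by simp
qed

lemma inj_on_rees_exp_standard:
  "inj_on (rees_exp d a) {s \<in> monoms_in (d + 3). standard_monom (rees_binomials d a) s}"
  by (rule inj_on_inverseI[where g = "rees_lift d a"]) (simp add: rees_lift_rees_exp)

end

context convex_exponents
begin

lemma rees_exp_in_rees_cone: "rees_exp d a m \<in> rees_cone d a"
proof -
  have "0 \<le> lin_form 3 (rees_cone_coeff d a i) (rees_exp d a m)" if i: "1 \<le> i" "i \<le> d" for i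
  proof -
    define b where "b = int (diff_seq a i)"
    define c where "c = int (a i) + b * int (d - i)"
    define T where "T j = int (rees_y_exp a j) + b * int (rees_x_exp d j) - int (rees_t_exp j) * c" for j
    have "lin_form 3 (rees_cone_coeff d a i) (rees_exp d a m)
        = int (lin_form (d + 3) (rees_y_exp a) m) + b * int (lin_form (d + 3) (rees_x_exp d) m)
          - int (lin_form (d + 3) rees_t_exp m) * c"
      unfolding lin_form_rees_cone_coeff rees_exp_def lookup_monom3 b_def c_def by simp
    also have "\<dots> = (\<Sum>j<d + 3. int (lookup m j) * T j)"
      unfolding lin_form_def T_def
      by (simp add: algebra_simps sum.distrib sum_subtractf sum_distrib_left sum_distrib_right)
    also have "\<dots> \<ge> 0"
    proof (rule sum_nonneg)
      fix j assume "j \<in> {..<d + 3}"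
      then have "j = 0 \<or> j = 1 \<or> (\<exists>l. j = l + 2 \<and> l \<le> d)" by (cases j; cases "j - 1") auto
      then consider "j = 0" | "j = 1" | l where "j = l + 2" "l \<le> d" by blast
      then have "0 \<le> T j"
      proof cases
        case 3
        have "int (a i) + b * (int l - int i) \<le> int (a l)"
          unfolding b_def using above_tangent[OF i 3(2)] .
        moreover have "int (d - l) = int d - int l" "int (d - i) = int d - int i" using 3 i by auto
        ultimately show ?thesis using 3 by (simp add: T_def c_def algebra_simps)
      qed (simp_all add: T_def b_def)
      then show "0 \<le> int (lookup m j) * T j" by simp
    qed
    finally show ?thesis .
  qed
  then show ?thesis
    unfolding rees_cone_def polyhedral_monoid_def rees_exp_def by (simp add: monoms_in_monom3)
qed

lemma rees_cone_bound:
  assumes e: "monom3 X Y D \<in> rees_cone d a"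
    and div: "D * d = X + (D * k + q)" "q < D" "0 < D * k + q"
  shows "(D - q) * a k + q * a (k + 1) \<le> Y"
proof -
  have facet: "int D * (int (a i) + int (diff_seq a i) * int (d - i)) \<le> int Y + int (diff_seq a i) * int X"
    if "1 \<le> i" "i \<le> d" for i
    using e that unfolding rees_cone_def polyhedral_monoid_def lin_form_rees_cone_coeff
    by (auto simp: lookup_monom3)
  have "0 < D" using div(2) by simp
  note bounds = quotient_bounds[OF div(1) this]
  show ?thesis
  proof (cases "q = 0")
    case True
    then have "1 \<le> k" using div(3) by (cases k) auto
    have X: "int X = int D * (int d - int k)"
      using arg_cong[OF div(1), of int] True by (simp add: algebra_simps)
    have "int D * (int (a k) + int (diff_seq a k) * (int d - int k))
        \<le> int Y + int (diff_seq a k) * (int D * (int d - int k))"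
      using facet[OF \<open>1 \<le> k\<close> bounds(1)] X bounds(1) by (simp add: of_nat_diff)
    then have "int (D * a k) \<le> int Y" by (simp add: algebra_simps)
    then show ?thesis unfolding of_nat_le_iff using True by simp
  next
    case False
    then have "k + 1 \<le> d" using bounds by simp
    have ak: "a (k + 1) = a k + diff_seq a (k + 1)" using a_step[of "k + 1"] \<open>k + 1 \<le> d\<close> by simp
    have X: "int X = int D * (int d - int k - 1) + (int D - int q)"
      using arg_cong[OF div(1), of int] by (simp add: algebra_simps)
    have "int D * (int (a (k + 1)) + int (diff_seq a (k + 1)) * (int d - int k - 1))
        \<le> int Y + int (diff_seq a (k + 1)) * (int D * (int d - int k - 1) + (int D - int q))"
      using facet[of "k + 1"] \<open>k + 1 \<le> d\<close> X by (simp add: of_nat_diff algebra_simps)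
    then have "int D * int (a (k + 1)) - int (diff_seq a (k + 1)) * (int D - int q) \<le> int Y"
      by (simp add: algebra_simps)
    then have "int (D * a k + q * diff_seq a (k + 1)) \<le> int Y"
      using ak by (simp add: algebra_simps)
    moreover obtain t where "D = q + t" using div(2) less_imp_add_positive by blast
    then have "(D - q) * a k + q * a (k + 1) = D * a k + q * diff_seq a (k + 1)"
      using ak by (simp add: algebra_simps)
    ultimately show ?thesis unfolding of_nat_le_iff by simp
  qed
qed

lemma rees_lift_in_rees_cone:
  assumes e: "e \<in> rees_cone d a"
  shows "rees_lift d a e \<in> monoms_in (d + 3) \<and> rees_exp d a (rees_lift d a e) = e"
proof -
  define X Y D where "X = lookup e 0" and "Y = lookup e 1" and "D = lookup e 2"
  have e_eq: "e = monom3 X Y D"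
    using e lookup_monoms_in monom3_lookup unfolding rees_cone_def polyhedral_monoid_def X_def Y_def D_def
    by blast
  show ?thesis
  proof (cases "D * d \<le> X")
    case True
    then show ?thesis unfolding e_eq by (simp add: rees_lift_monom3 rees_exp_monom3 monoms_in_monom3)
  next
    case False
    define k where "k = (D * d - X) div D"
    define q where "q = (D * d - X) mod D"
    have "0 < D" using False by (cases D) auto
    then have div: "D * d - X = D * k + q" "q < D" unfolding k_def q_def by simp_all
    then have div': "D * d = X + (D * k + q)" using False by simp
    note bounds = quotient_bounds[OF div' \<open>0 < D\<close>]
    let ?\<beta> = "(D - q) * a k + q * a (k + 1)"
    have "0 < D * k + q" using div' False by linarith
    then have "?\<beta> \<le> Y" by (rule rees_cone_bound[OF e[unfolded e_eq] div' div(2)])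
    have lift: "rees_lift d a e = single 1 (Y - ?\<beta>) + single (k + 2) (D - q) + single (k + 3) q"
      unfolding e_eq by (rule rees_lift_consecutive[OF False div])
    have "(D - q) * (d - k) + q * (d - (k + 1)) = X"
      using consecutive_exponent_identity[of q D k d] div' div(2) bounds by simp
    then have "rees_exp d a (rees_lift d a e) = e"
      unfolding lift rees_exp_consecutive[OF bounds]
      using \<open>?\<beta> \<le> Y\<close> div(2) e_eq by simp
    moreover have "rees_lift d a e \<in> monoms_in (d + 3)"
      unfolding lift using bounds
      by (cases "q = 0") (auto intro!: monoms_in_add monoms_in_single)
    ultimately show ?thesis by blast
  qed
qed

lemma rees_algebra_eq_cone: "rees_algebra d a = monomial_subring (rees_cone d a)"
proof -
  have "rees_exp d a ` monoms_in (d + 3) = rees_cone d a"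
    using rees_exp_in_rees_cone rees_lift_in_rees_cone by (auto intro: image_eqI[OF sym])
  then show ?thesis by (simp add: rees_algebra_eq)
qed

end
theorem proposition6p2:
  fixes d :: nat and a :: "nat \<Rightarrow> nat"
    and ord :: "monom \<Rightarrow> monom \<Rightarrow> bool"
  assumes a0: "a 0 = 0"
    and a_incr: "\<And>i. 1 \<le> i \<Longrightarrow> i \<le> d \<Longrightarrow> a (i - 1) < a i"
    and b_mono: "\<And>i. 1 \<le> i \<Longrightarrow> i + 1 \<le> d \<Longrightarrow> diff_seq a i \<le> diff_seq a (i + 1)"
    and ord: "term_order (d + 3) ord"
    and init_lin: "\<And>i. 1 \<le> i \<Longrightarrow> i \<le> d \<Longrightarrow>
        lead_monom ord (gb_linear a i :: 'k::{alg_closed_field, field_char_0} mpoly) =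
        lead_monom ord (Var 0 * Tv i :: 'k mpoly)"
    and init_quad: "\<And>i j. j < i \<Longrightarrow> i \<le> d \<Longrightarrow> 1 \<le> j \<Longrightarrow>
        lead_monom ord (gb_quad a i j :: 'k mpoly) = lead_monom ord (Tv i * Tv (j - 1) :: 'k mpoly)"
  shows "groebner_basis (d + 3) ord (gb_set d a :: 'k mpoly set) (rees_kernel d a)
         \<and> normal_subring (rees_algebra d a :: 'k mpoly set)"
proof
  interpret convex_exponents d a
    using a0 a_incr b_mono by unfold_locales
  have B: "L \<in> monoms_in (d + 3) \<and> R \<in> monoms_in (d + 3) \<and> L \<noteq> R
      \<and> rees_exp d a L = rees_exp d a R \<and> ord R L"
    and weight: "rees_weight d R < rees_weight d L" if "(L, R) \<in> rees_binomials d a" for L R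
    using rees_binomials_weight[OF that] rees_exp_binomial[OF that]
      rees_binomial_lead[OF ord init_lin init_quad that] by auto
  have reduce: "\<exists>s\<in>monoms_in (d + 3). standard_monom (rees_binomials d a) s
      \<and> rees_exp d a s = rees_exp d a m \<and> ord s m" if "m \<in> monoms_in (d + 3)" for m
    by (rule standard_monom_reduction[OF ord _ rees_exp_add[of d a] rees_weight_add[of d] that])
      (use B weight in blast)
  show "groebner_basis (d + 3) ord (gb_set d a :: 'k mpoly set) (rees_kernel d a)"
    unfolding gb_set_eq rees_kernel_eq
    by (rule binomial_groebner_basis[OF ord B reduce inj_on_rees_exp_standard])
  show "normal_subring (rees_algebra d a :: 'k mpoly set)"
    unfolding rees_algebra_eq_cone rees_cone_def by (rule normal_subring_polyhedral_monoid)
qed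

end
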